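(* Let $\mathcal{C}$ be a deflation-exact category and let $\mathcal{A}\subseteq\mathcal{C}$ be an admissibly deflation-percolating subcategory. Then $S_{\mathcal{A}}=S_{\mathcal{A}}\cap\mathrm{Adm}(\mathcal{C})$; in particular every weak isomorphism is admissible. Moreover, $S_{\mathcal{A}}$ is a right multiplicative system in $\mathcal{C}$ such that the commutative square in axiom RMS2 can always be chosen to be a pullback square; in particular, pullbacks along weak isomorphisms exist.
   Context: A conflation category is an additive category together with a class of kernel-cokernel pairs $A\xrightarrow{f}B\xrightarrow{g}C$ (i.e. $f=\ker g$ and $g=\operatorname{coker} f$), closed under isomorphisms, called conflations; the first morphism of a conflation is called an inflation ($\rightarrowtail$) and the second a deflation ($\twoheadrightarrow$). A deflation-exact category is a conflation category satisfying: (R0) $1_0$ is a deflation; (R1) the composition of two deflations is a deflation; (R2) the pullback of a deflation along any morphism exists and is a deflation. A morphism is admissible if it factors as a deflation followed by an inflation; $\mathrm{Adm}(\mathcal{C})$ is the set of admissible morphisms. A non-empty full subcategory $\mathcal{A}$ of a conflation category $\mathcal{C}$ is admissibly deflation-percolating if: (A1) for every conflation $A'\rightarrowtail A\twoheadrightarrow A''$ in $\mathcal{C}$, $A\in\mathcal{A}$ iff $A',A''\in\mathcal{A}$; (A2) every morphism $C\to A$ with $A\in\mathcal{A}$ factors as a deflation $C\twoheadrightarrow A'$ followed by an inflation $A'\rightarrowtail A$ with $A'\in\mathcal{A}$; (A3) if $a\colon C\rightarrowtail D$ is an inflation and $b\colon C\twoheadrightarrow A$ is a deflation with $A\in\mathcal{A}$,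 then the pushout of $a$ along $b$ exists and in the pushout square the map $D\to P$ is a deflation and $A\to P$ is an inflation. An $\mathcal{A}^{-1}$-inflation is an inflation whose cokernel lies in $\mathcal{A}$; an $\mathcal{A}^{-1}$-deflation is a deflation whose kernel lies in $\mathcal{A}$. The set $S_{\mathcal{A}}$ of weak isomorphisms consists of all finite composites of $\mathcal{A}^{-1}$-inflations and $\mathcal{A}^{-1}$-deflations. A set $S$ of morphisms is a right multiplicative system if: (RMS1) identities are in $S$ and $S$ is closed under composition; (RMS2) for every $f\colon Z\to W$ and $s\colon Y\to W$ with $s\in S$ there exist $t\colon X\to Z$ in $S$ and $g\colon X\to Y$ with $fg'$... precisely $f t = s g$; (RMS3) if $f,g\colon X\to Y$ and $s\in S$ with source $Y$ satisfy $sf=sg$, then there is $t\in S$ with target $X$ such that $ft=gt$. *)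

theory Defs
  imports Main
begin

record ('o,'m) addcat =
  Obj  :: "'o set"
  Mor  :: "'m set"
  Dom  :: "'m \<Rightarrow> 'o"
  Cod  :: "'m \<Rightarrow> 'o"
  Id   :: "'o \<Rightarrow> 'm"
  Comp :: "'m \<Rightarrow> 'm \<Rightarrow> 'm"   (* Comp g f = g \<circ> f *)
  Add  :: "'m \<Rightarrow> 'm \<Rightarrow> 'm"
  Zm   :: "'o \<Rightarrow> 'o \<Rightarrow> 'm"   (* zero morphism a \<rightarrow> b *)

definition hom :: "('o,'m,'x) addcat_scheme \<Rightarrow> 'o \<Rightarrow> 'o \<Rightarrow> 'm set" where
  "hom C a b = {f \<in> Mor C. Dom C f = a \<and> Cod C f = b}"

definition category :: "('o,'m,'x) addcat_scheme \<Rightarrow> bool" where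
  "category C \<longleftrightarrow>
     (\<forall>f\<in>Mor C. Dom C f \<in> Obj C \<and> Cod C f \<in> Obj C) \<and>
     (\<forall>a\<in>Obj C. Id C a \<in> hom C a a) \<and>
     (\<forall>f\<in>Mor C. \<forall>g\<in>Mor C. Cod C f = Dom C g \<longrightarrow> Comp C g f \<in> hom C (Dom C f) (Cod C g)) \<and>
     (\<forall>f\<in>Mor C. Comp C (Id C (Cod C f)) f = f \<and> Comp C f (Id C (Dom C f)) = f) \<and>
     (\<forall>f\<in>Mor C. \<forall>g\<in>Mor C. \<forall>h\<in>Mor C. Cod C f = Dom C g \<longrightarrow> Cod C g = Dom C h \<longrightarrow>
        Comp C h (Comp C g f) = Comp C (Comp C h g) f)"

definition preadditive :: "('o,'m,'x) addcat_scheme \<Rightarrow> bool" where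
  "preadditive C \<longleftrightarrow> category C \<and>
     (\<forall>a\<in>Obj C. \<forall>b\<in>Obj C.
        Zm C a b \<in> hom C a b \<and>
        (\<forall>f\<in>hom C a b. \<forall>g\<in>hom C a b. Add C f g \<in> hom C a b \<and> Add C f g = Add C g f) \<and>
        (\<forall>f\<in>hom C a b. \<forall>g\<in>hom C a b. \<forall>h\<in>hom C a b. Add C (Add C f g) h = Add C f (Add C g h)) \<and>
        (\<forall>f\<in>hom C a b. Add C f (Zm C a b) = f) \<and>
        (\<forall>f\<in>hom C a b. \<exists>g\<in>hom C a b. Add C f g = Zm C a b)) \<and>
     (\<forall>a\<in>Obj C. \<forall>b\<in>Obj C. \<forall>c\<in>Obj C. \<forall>f\<in>hom C a b. \<forall>g\<in>hom C a b. \<forall>h\<in>hom C b c.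
        Comp C h (Add C f g) = Add C (Comp C h f) (Comp C h g)) \<and>
     (\<forall>a\<in>Obj C. \<forall>b\<in>Obj C. \<forall>c\<in>Obj C. \<forall>f\<in>hom C a b. \<forall>g\<in>hom C b c. \<forall>h\<in>hom C b c.
        Comp C (Add C g h) f = Add C (Comp C g f) (Comp C h f))"

definition zero_object :: "('o,'m,'x) addcat_scheme \<Rightarrow> 'o \<Rightarrow> bool" where
  "zero_object C z \<longleftrightarrow> z \<in> Obj C \<and>
     (\<forall>a\<in>Obj C. (\<exists>!f. f \<in> hom C z a) \<and> (\<exists>!f. f \<in> hom C a z))"

definition is_biproduct ::
  "('o,'m,'x) addcat_scheme \<Rightarrow> 'o \<Rightarrow> 'o \<Rightarrow> 'o \<Rightarrow> 'm \<Rightarrow> 'm \<Rightarrow> 'm \<Rightarrow> 'm \<Rightarrow> bool" where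
  "is_biproduct C a b c i1 i2 p1 p2 \<longleftrightarrow>
     c \<in> Obj C \<and> i1 \<in> hom C a c \<and> i2 \<in> hom C b c \<and> p1 \<in> hom C c a \<and> p2 \<in> hom C c b \<and>
     Comp C p1 i1 = Id C a \<and> Comp C p2 i2 = Id C b \<and>
     Comp C p2 i1 = Zm C a b \<and> Comp C p1 i2 = Zm C b a \<and>
     Add C (Comp C i1 p1) (Comp C i2 p2) = Id C c"

definition additive :: "('o,'m,'x) addcat_scheme \<Rightarrow> bool" where
  "additive C \<longleftrightarrow> preadditive C \<and> (\<exists>z. zero_object C z) \<and>
     (\<forall>a\<in>Obj C. \<forall>b\<in>Obj C. \<exists>c i1 i2 p1 p2. is_biproduct C a b c i1 i2 p1 p2)"

definition iso :: "('o,'m,'x) addcat_scheme \<Rightarrow> 'm \<Rightarrow> bool" where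
  "iso C f \<longleftrightarrow> f \<in> Mor C \<and> (\<exists>g\<in>hom C (Cod C f) (Dom C f).
     Comp C g f = Id C (Dom C f) \<and> Comp C f g = Id C (Cod C f))"

definition is_kernel :: "('o,'m,'x) addcat_scheme \<Rightarrow> 'm \<Rightarrow> 'm \<Rightarrow> bool" where
  "is_kernel C f g \<longleftrightarrow> f \<in> Mor C \<and> g \<in> Mor C \<and> Cod C f = Dom C g \<and>
     Comp C g f = Zm C (Dom C f) (Cod C g) \<and>
     (\<forall>x\<in>Obj C. \<forall>h\<in>hom C x (Dom C g). Comp C g h = Zm C x (Cod C g) \<longrightarrow>
        (\<exists>!u. u \<in> hom C x (Dom C f) \<and> Comp C f u = h))"

definition is_cokernel :: "('o,'m,'x) addcat_scheme \<Rightarrow> 'm \<Rightarrow> 'm \<Rightarrow> bool" where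
  "is_cokernel C g f \<longleftrightarrow> f \<in> Mor C \<and> g \<in> Mor C \<and> Cod C f = Dom C g \<and>
     Comp C g f = Zm C (Dom C f) (Cod C g) \<and>
     (\<forall>x\<in>Obj C. \<forall>h\<in>hom C (Cod C f) x. Comp C h f = Zm C (Dom C f) x \<longrightarrow>
        (\<exists>!u. u \<in> hom C (Cod C g) x \<and> Comp C u g = h))"

definition kernel_cokernel_pair :: "('o,'m,'x) addcat_scheme \<Rightarrow> 'm \<Rightarrow> 'm \<Rightarrow> bool" where
  "kernel_cokernel_pair C f g \<longleftrightarrow> is_kernel C f g \<and> is_cokernel C g f"

text \<open>Pullback of the cospan f : Z \<rightarrow> W, s : Y \<rightarrow> W given by t : X \<rightarrow> Z, g : X \<rightarrow> Y.\<close>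
definition is_pullback :: "('o,'m,'x) addcat_scheme \<Rightarrow> 'm \<Rightarrow> 'm \<Rightarrow> 'm \<Rightarrow> 'm \<Rightarrow> bool" where
  "is_pullback C f s t g \<longleftrightarrow>
     f \<in> Mor C \<and> s \<in> Mor C \<and> t \<in> Mor C \<and> g \<in> Mor C \<and>
     Cod C f = Cod C s \<and> Cod C t = Dom C f \<and> Cod C g = Dom C s \<and> Dom C t = Dom C g \<and>
     Comp C f t = Comp C s g \<and>
     (\<forall>x\<in>Obj C. \<forall>h\<in>hom C x (Dom C f). \<forall>k\<in>hom C x (Dom C s).
        Comp C f h = Comp C s k \<longrightarrow>
        (\<exists>!u. u \<in> hom C x (Dom C t) \<and> Comp C t u = h \<and> Comp C g u = k))"

text \<open>Pushout of the span a : C \<rightarrow> D, b : C \<rightarrow> A given by p : D \<rightarrow> P, q : A \<rightarrow> P.\<close>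
definition is_pushout :: "('o,'m,'x) addcat_scheme \<Rightarrow> 'm \<Rightarrow> 'm \<Rightarrow> 'm \<Rightarrow> 'm \<Rightarrow> bool" where
  "is_pushout C a b p q \<longleftrightarrow>
     a \<in> Mor C \<and> b \<in> Mor C \<and> p \<in> Mor C \<and> q \<in> Mor C \<and>
     Dom C a = Dom C b \<and> Dom C p = Cod C a \<and> Dom C q = Cod C b \<and> Cod C p = Cod C q \<and>
     Comp C p a = Comp C q b \<and>
     (\<forall>x\<in>Obj C. \<forall>h\<in>hom C (Cod C a) x. \<forall>k\<in>hom C (Cod C b) x.
        Comp C h a = Comp C k b \<longrightarrow>
        (\<exists>!u. u \<in> hom C (Cod C p) x \<and> Comp C u p = h \<and> Comp C u q = k))"

text \<open>E is the class of conflations, given as pairs (inflation, deflation).\<close>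
definition conflation_category :: "('o,'m,'x) addcat_scheme \<Rightarrow> ('m \<times> 'm) set \<Rightarrow> bool" where
  "conflation_category C E \<longleftrightarrow> additive C \<and>
     (\<forall>(f,g)\<in>E. kernel_cokernel_pair C f g) \<and>
     (\<forall>(f,g)\<in>E. \<forall>f' g' \<alpha> \<beta> \<gamma>.
        f' \<in> Mor C \<and> g' \<in> Mor C \<and> Cod C f' = Dom C g' \<and>
        iso C \<alpha> \<and> iso C \<beta> \<and> iso C \<gamma> \<and>
        \<alpha> \<in> hom C (Dom C f) (Dom C f') \<and> \<beta> \<in> hom C (Cod C f) (Cod C f') \<and>
        \<gamma> \<in> hom C (Cod C g) (Cod C g') \<and>
        Comp C \<beta> f = Comp C f' \<alpha> \<and> Comp C \<gamma> g = Comp C g' \<beta>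
        \<longrightarrow> (f',g') \<in> E)"

definition inflation :: "('m \<times> 'm) set \<Rightarrow> 'm \<Rightarrow> bool" where
  "inflation E f \<longleftrightarrow> (\<exists>g. (f,g) \<in> E)"

definition deflation :: "('m \<times> 'm) set \<Rightarrow> 'm \<Rightarrow> bool" where
  "deflation E g \<longleftrightarrow> (\<exists>f. (f,g) \<in> E)"

definition deflation_exact :: "('o,'m,'x) addcat_scheme \<Rightarrow> ('m \<times> 'm) set \<Rightarrow> bool" where
  "deflation_exact C E \<longleftrightarrow> conflation_category C E \<and>
     \<comment> \<open>R0\<close>
     (\<exists>z. zero_object C z \<and> deflation E (Id C z)) \<and>
     \<comment> \<open>R1\<close>
     (\<forall>d1 d2. deflation E d1 \<and> deflation E d2 \<and> Cod C d1 = Dom C d2 \<longrightarrow>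
        deflation E (Comp C d2 d1)) \<and>
     \<comment> \<open>R2\<close>
     (\<forall>d f. deflation E d \<and> f \<in> Mor C \<and> Cod C f = Cod C d \<longrightarrow>
        (\<exists>d' f'. is_pullback C f d d' f' \<and> deflation E d'))"

definition admissible :: "('o,'m,'x) addcat_scheme \<Rightarrow> ('m \<times> 'm) set \<Rightarrow> 'm set" where
  "admissible C E = {h. \<exists>d i. deflation E d \<and> inflation E i \<and> Cod C d = Dom C i \<and> h = Comp C i d}"

text \<open>A full subcategory is given by its set of objects.\<close>
definition adm_defl_percolating ::
  "('o,'m,'x) addcat_scheme \<Rightarrow> ('m \<times> 'm) set \<Rightarrow> 'o set \<Rightarrow> bool" where
  "adm_defl_percolating C E A \<longleftrightarrow> A \<subseteq> Obj C \<and> A \<noteq> {} \<and>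
     \<comment> \<open>A1\<close>
     (\<forall>(f,g)\<in>E. Cod C f \<in> A \<longleftrightarrow> (Dom C f \<in> A \<and> Cod C g \<in> A)) \<and>
     \<comment> \<open>A2\<close>
     (\<forall>h\<in>Mor C. Cod C h \<in> A \<longrightarrow>
        (\<exists>d i. deflation E d \<and> inflation E i \<and> Cod C d = Dom C i \<and> Cod C d \<in> A \<and>
               h = Comp C i d)) \<and>
     \<comment> \<open>A3\<close>
     (\<forall>a b. inflation E a \<and> deflation E b \<and> Dom C a = Dom C b \<and> Cod C b \<in> A \<longrightarrow>
        (\<exists>p q. is_pushout C a b p q \<and> deflation E p \<and> inflation E q))"

inductive_set weak_isos ::
  "('o,'m,'x) addcat_scheme \<Rightarrow> ('m \<times> 'm) set \<Rightarrow> 'o set \<Rightarrow> 'm set"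
  for C E A where
  infl: "(f,g) \<in> E \<Longrightarrow> Cod C g \<in> A \<Longrightarrow> f \<in> weak_isos C E A"
| defl: "(f,g) \<in> E \<Longrightarrow> Dom C f \<in> A \<Longrightarrow> g \<in> weak_isos C E A"
| comp: "s \<in> weak_isos C E A \<Longrightarrow> t \<in> weak_isos C E A \<Longrightarrow> Cod C s = Dom C t \<Longrightarrow>
         Comp C t s \<in> weak_isos C E A"

definition right_mult_system :: "('o,'m,'x) addcat_scheme \<Rightarrow> 'm set \<Rightarrow> bool" where
  "right_mult_system C S \<longleftrightarrow> S \<subseteq> Mor C \<and>
     \<comment> \<open>RMS1\<close>
     (\<forall>a\<in>Obj C. Id C a \<in> S) \<and>
     (\<forall>s\<in>S. \<forall>t\<in>S. Cod C s = Dom C t \<longrightarrow> Comp C t s \<in> S) \<and>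
     \<comment> \<open>RMS2\<close>
     (\<forall>f\<in>Mor C. \<forall>s\<in>S. Cod C f = Cod C s \<longrightarrow>
        (\<exists>t g. t \<in> S \<and> g \<in> Mor C \<and> Cod C t = Dom C f \<and> Cod C g = Dom C s \<and>
               Dom C t = Dom C g \<and> Comp C f t = Comp C s g)) \<and>
     \<comment> \<open>RMS3\<close>
     (\<forall>f\<in>Mor C. \<forall>g\<in>Mor C. \<forall>s\<in>S. Dom C f = Dom C g \<and> Cod C f = Cod C g \<and>
        Dom C s = Cod C f \<and> Comp C s f = Comp C s g \<longrightarrow>
        (\<exists>t\<in>S. Cod C t = Dom C f \<and> Comp C f t = Comp C g t))"

definition RMS2_pullback :: "('o,'m,'x) addcat_scheme \<Rightarrow> 'm set \<Rightarrow> bool" where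
  "RMS2_pullback C S \<longleftrightarrow>
     (\<forall>f\<in>Mor C. \<forall>s\<in>S. Cod C f = Cod C s \<longrightarrow>
        (\<exists>t g. t \<in> S \<and> is_pullback C f s t g))"

end

theory Submission
  imports Defs
begin

text \<open>
  Every morphism h into an object of A has a kernel, and every kernel of h is an
  A^{-1}-inflation: by A2, h is an inflation after a deflation e onto an object of A, and
  ker h = ker e.  Hence the pullback of an A^{-1}-inflation i = ker p along f exists and is
  ker (p f); by R2, and because kernels of deflations are preserved by pullback, pullbacks of
  A^{-1}-deflations are A^{-1}-deflations.  Pasting these squares gives RMS2 with pullback
  squares.  For RMS3, if d f = d g for an A^{-1}-deflation d, then f - g factors through
  ker d, whose domain lies in A, and the kernel of that factor is an A^{-1}-inflation
  equalising f and g.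

  Admissibility comes from a normal form i d of weak isomorphisms, with i an
  A^{-1}-inflation and d an A^{-1}-deflation.  Both classes are closed under composition, and
  a composite d i in the wrong order is rewritten as i' d' by pushing k = ker d out along
  the deflation part of a factorisation of p k (axioms A2 and A3), p being the cokernel of i.
\<close>

locale cat =
  fixes C :: "('o,'m,'x) addcat_scheme"
  assumes category: "category C"
begin

abbreviation comp :: "'m \<Rightarrow> 'm \<Rightarrow> 'm"  (infixr "\<cdot>" 55)
  where "g \<cdot> f \<equiv> Comp C g f"

lemma dom_in_Obj [simp]: "f \<in> Mor C \<Longrightarrow> Dom C f \<in> Obj C"
  and cod_in_Obj [simp]: "f \<in> Mor C \<Longrightarrow> Cod C f \<in> Obj C"
  using category unfolding category_def by blast+

lemma Id_in_Mor [simp]: "a \<in> Obj C \<Longrightarrow> Id C a \<in> Mor C"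
  and Dom_Id [simp]: "a \<in> Obj C \<Longrightarrow> Dom C (Id C a) = a"
  and Cod_Id [simp]: "a \<in> Obj C \<Longrightarrow> Cod C (Id C a) = a"
  using category unfolding category_def hom_def by blast+

lemma comp_in_Mor [simp]: "f \<in> Mor C \<Longrightarrow> g \<in> Mor C \<Longrightarrow> Cod C f = Dom C g \<Longrightarrow> g \<cdot> f \<in> Mor C"
  and Dom_comp [simp]: "f \<in> Mor C \<Longrightarrow> g \<in> Mor C \<Longrightarrow> Cod C f = Dom C g \<Longrightarrow> Dom C (g \<cdot> f) = Dom C f"
  and Cod_comp [simp]: "f \<in> Mor C \<Longrightarrow> g \<in> Mor C \<Longrightarrow> Cod C f = Dom C g \<Longrightarrow> Cod C (g \<cdot> f) = Cod C g"
  using category unfolding category_def hom_def by blast+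

lemma comp_Id_left [simp]: "f \<in> Mor C \<Longrightarrow> Cod C f = b \<Longrightarrow> Id C b \<cdot> f = f"
  and comp_Id_right [simp]: "f \<in> Mor C \<Longrightarrow> Dom C f = a \<Longrightarrow> f \<cdot> Id C a = f"
  using category unfolding category_def by blast+

lemma comp_assoc:
  "f \<in> Mor C \<Longrightarrow> g \<in> Mor C \<Longrightarrow> h \<in> Mor C \<Longrightarrow> Cod C f = Dom C g \<Longrightarrow> Cod C g = Dom C h \<Longrightarrow>
   (h \<cdot> g) \<cdot> f = h \<cdot> g \<cdot> f"
  using category unfolding category_def by metis

lemma hom_objs: "f \<in> hom C a b \<Longrightarrow> a \<in> Obj C \<and> b \<in> Obj C"
  unfolding hom_def by auto

definition inverses :: "'m \<Rightarrow> 'm \<Rightarrow> bool" where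
  "inverses a a' \<longleftrightarrow> a \<in> Mor C \<and> a' \<in> Mor C \<and> Dom C a' = Cod C a \<and> Cod C a' = Dom C a \<and>
     a' \<cdot> a = Id C (Dom C a) \<and> a \<cdot> a' = Id C (Cod C a)"

lemma inverses_sym: "inverses a a' \<Longrightarrow> inverses a' a"
  unfolding inverses_def by auto

lemma inverses_iso: "inverses a a' \<Longrightarrow> iso C a"
  unfolding inverses_def iso_def hom_def by auto

lemma inverses_Id [simp]: "a \<in> Obj C \<Longrightarrow> inverses (Id C a) (Id C a)"
  unfolding inverses_def by simp

section \<open>Pullbacks and pushouts\<close>

lemma is_pullbackD:
  "is_pullback C f s t g \<Longrightarrow> f \<in> Mor C \<and> s \<in> Mor C \<and> t \<in> Mor C \<and> g \<in> Mor C \<and>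
     Cod C f = Cod C s \<and> Cod C t = Dom C f \<and> Cod C g = Dom C s \<and> Dom C t = Dom C g \<and> f \<cdot> t = s \<cdot> g"
  unfolding is_pullback_def by blast

lemma is_pullbackI:
  assumes "f \<in> Mor C" "s \<in> Mor C" "t \<in> Mor C" "g \<in> Mor C"
    "Cod C f = Cod C s" "Cod C t = Dom C f" "Cod C g = Dom C s" "Dom C t = Dom C g" "f \<cdot> t = s \<cdot> g"
    and factor: "\<And>h k. h \<in> Mor C \<Longrightarrow> k \<in> Mor C \<Longrightarrow> Dom C k = Dom C h \<Longrightarrow> Cod C h = Dom C f \<Longrightarrow>
      Cod C k = Dom C s \<Longrightarrow> f \<cdot> h = s \<cdot> k \<Longrightarrow>
      \<exists>u. u \<in> Mor C \<and> Dom C u = Dom C h \<and> Cod C u = Dom C t \<and> t \<cdot> u = h \<and> g \<cdot> u = k"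
    and unique: "\<And>u1 u2. u1 \<in> Mor C \<Longrightarrow> u2 \<in> Mor C \<Longrightarrow> Dom C u2 = Dom C u1 \<Longrightarrow>
      Cod C u1 = Dom C t \<Longrightarrow> Cod C u2 = Dom C t \<Longrightarrow> t \<cdot> u1 = t \<cdot> u2 \<Longrightarrow> g \<cdot> u1 = g \<cdot> u2 \<Longrightarrow> u1 = u2"
  shows "is_pullback C f s t g"
  unfolding is_pullback_def
proof (intro conjI ballI impI)
  fix x h k assume x: "x \<in> Obj C" "h \<in> hom C x (Dom C f)" "k \<in> hom C x (Dom C s)" "f \<cdot> h = s \<cdot> k"
  then obtain u where u: "u \<in> Mor C" "Dom C u = Dom C h" "Cod C u = Dom C t" "t \<cdot> u = h" "g \<cdot> u = k"
    using factor[of h k] unfolding hom_def by auto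
  show "\<exists>!u. u \<in> hom C x (Dom C t) \<and> t \<cdot> u = h \<and> g \<cdot> u = k"
  proof (rule ex1I[of _ u])
    show "u \<in> hom C x (Dom C t) \<and> t \<cdot> u = h \<and> g \<cdot> u = k"
      using u x unfolding hom_def by auto
    fix u' assume "u' \<in> hom C x (Dom C t) \<and> t \<cdot> u' = h \<and> g \<cdot> u' = k"
    then show "u' = u" using unique[of u' u] u x unfolding hom_def by auto
  qed
qed (use assms in auto)

lemma pullback_factors:
  assumes pb: "is_pullback C f s t g" and "h \<in> Mor C" "k \<in> Mor C" "Dom C k = Dom C h"
    "Cod C h = Dom C f" "Cod C k = Dom C s" "f \<cdot> h = s \<cdot> k"
  shows "\<exists>u. u \<in> Mor C \<and> Dom C u = Dom C h \<and> Cod C u = Dom C t \<and> t \<cdot> u = h \<and> g \<cdot> u = k"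
proof -
  have "h \<in> hom C (Dom C h) (Dom C f)" "k \<in> hom C (Dom C h) (Dom C s)"
    using assms by (auto simp: hom_def)
  then have "\<exists>!u. u \<in> hom C (Dom C h) (Dom C t) \<and> t \<cdot> u = h \<and> g \<cdot> u = k"
    using pb assms unfolding is_pullback_def by simp
  then show ?thesis unfolding hom_def by blast
qed

lemma pullback_jointly_monic:
  assumes pb: "is_pullback C f s t g" and u: "u1 \<in> Mor C" "u2 \<in> Mor C" "Dom C u2 = Dom C u1"
    "Cod C u1 = Dom C t" "Cod C u2 = Dom C t" and eq: "t \<cdot> u1 = t \<cdot> u2" "g \<cdot> u1 = g \<cdot> u2"
  shows "u1 = u2"
proof -
  note sq = is_pullbackD[OF pb]
  have "f \<cdot> t \<cdot> u1 = s \<cdot> g \<cdot> u1"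
    using u sq comp_assoc[of u1 t f] comp_assoc[of u1 g s] by simp
  then have "\<exists>!u. u \<in> hom C (Dom C u1) (Dom C t) \<and> t \<cdot> u = t \<cdot> u1 \<and> g \<cdot> u = g \<cdot> u1"
    using pb u sq unfolding is_pullback_def by (simp add: hom_def)
  moreover have "u1 \<in> hom C (Dom C u1) (Dom C t)" "u2 \<in> hom C (Dom C u1) (Dom C t)"
    using u by (auto simp: hom_def)
  ultimately show ?thesis using eq by metis
qed

lemma is_pullback_sym:
  assumes pb: "is_pullback C f s t g"
  shows "is_pullback C s f g t"
proof (rule is_pullbackI)
  fix h k assume "h \<in> Mor C" "k \<in> Mor C" "Dom C k = Dom C h" "Cod C h = Dom C s" "Cod C k = Dom C f"
    "s \<cdot> h = f \<cdot> k"
  then show "\<exists>u. u \<in> Mor C \<and> Dom C u = Dom C h \<and> Cod C u = Dom C g \<and> g \<cdot> u = h \<and> t \<cdot> u = k"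
    using pullback_factors[OF pb, of k h] is_pullbackD[OF pb] by auto
qed (use is_pullbackD[OF pb] pullback_jointly_monic[OF pb] in auto)

lemma pullbacks_iso:
  assumes pb: "is_pullback C f s t g" and pb': "is_pullback C f s t' g'"
  shows "\<exists>\<theta> \<theta>'. inverses \<theta> \<theta>' \<and> Dom C \<theta> = Dom C t' \<and> Cod C \<theta> = Dom C t \<and> t' = t \<cdot> \<theta> \<and> g' = g \<cdot> \<theta>"
proof -
  note sq = is_pullbackD[OF pb] and sq' = is_pullbackD[OF pb']
  obtain \<theta> where \<theta>: "\<theta> \<in> Mor C" "Dom C \<theta> = Dom C t'" "Cod C \<theta> = Dom C t" "t \<cdot> \<theta> = t'" "g \<cdot> \<theta> = g'"
    using pullback_factors[OF pb, of t' g'] sq sq' by auto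
  obtain \<theta>' where \<theta>': "\<theta>' \<in> Mor C" "Dom C \<theta>' = Dom C t" "Cod C \<theta>' = Dom C t'" "t' \<cdot> \<theta>' = t" "g' \<cdot> \<theta>' = g"
    using pullback_factors[OF pb', of t g] sq sq' by auto
  have "\<theta>' \<cdot> \<theta> = Id C (Dom C \<theta>)"
    by (rule pullback_jointly_monic[OF pb'])
      (use \<theta> \<theta>' sq sq' comp_assoc[of \<theta> \<theta>' t'] comp_assoc[of \<theta> \<theta>' g'] in auto)
  moreover have "\<theta> \<cdot> \<theta>' = Id C (Cod C \<theta>)"
    by (rule pullback_jointly_monic[OF pb])
      (use \<theta> \<theta>' sq sq' comp_assoc[of \<theta>' \<theta> t] comp_assoc[of \<theta>' \<theta> g] in auto)
  ultimately have "inverses \<theta> \<theta>'" using \<theta> \<theta>' unfolding inverses_def by auto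
  then show ?thesis using \<theta> by blast
qed

lemma pullback_paste:
  assumes right: "is_pullback C f s2 t2 g2" and left: "is_pullback C g2 s1 t1 g1"
    and c: "Cod C s1 = Dom C s2"
  shows "is_pullback C f (s2 \<cdot> s1) (t2 \<cdot> t1) g1"
proof -
  note sq2 = is_pullbackD[OF right] and sq1 = is_pullbackD[OF left]
  have m: "f \<in> Mor C" "s2 \<in> Mor C" "t2 \<in> Mor C" "g2 \<in> Mor C" "s1 \<in> Mor C" "t1 \<in> Mor C" "g1 \<in> Mor C"
    using sq1 sq2 by auto
  obtain X1 X2 Y1 Y2 Z W where ob: "Dom C f = Z" "Cod C f = W" "Dom C s2 = Y2" "Cod C s2 = W"
    "Dom C t2 = X2" "Cod C t2 = Z" "Dom C g2 = X2" "Cod C g2 = Y2"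
    "Dom C s1 = Y1" "Cod C s1 = Y2" "Dom C t1 = X1" "Cod C t1 = X2" "Dom C g1 = X1" "Cod C g1 = Y1"
    using sq1 sq2 c by metis
  have eq: "f \<cdot> t2 = s2 \<cdot> g2" "g2 \<cdot> t1 = s1 \<cdot> g1" using sq1 sq2 by auto
  show ?thesis
  proof (rule is_pullbackI)
    show "f \<cdot> t2 \<cdot> t1 = (s2 \<cdot> s1) \<cdot> g1"
      using comp_assoc[of t1 t2 f] comp_assoc[of g1 s1 s2] comp_assoc[of t1 g2 s2] m ob eq by simp
  next
    fix h k assume a: "h \<in> Mor C" "k \<in> Mor C" "Dom C k = Dom C h" "Cod C h = Dom C f"
      "Cod C k = Dom C (s2 \<cdot> s1)" "f \<cdot> h = (s2 \<cdot> s1) \<cdot> k"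
    have k: "Cod C k = Y1" using a(5) m ob by simp
    have "f \<cdot> h = s2 \<cdot> s1 \<cdot> k" using a(6) comp_assoc[of k s1 s2] m ob k a by simp
    then obtain u2 where u2: "u2 \<in> Mor C" "Dom C u2 = Dom C h" "Cod C u2 = X2" "t2 \<cdot> u2 = h"
      "g2 \<cdot> u2 = s1 \<cdot> k"
      using pullback_factors[OF right, of h "s1 \<cdot> k"] a m ob k by auto
    obtain u1 where u1: "u1 \<in> Mor C" "Dom C u1 = Dom C h" "Cod C u1 = X1" "t1 \<cdot> u1 = u2" "g1 \<cdot> u1 = k"
      using pullback_factors[OF left, of u2 k] a m ob k u2 by auto
    show "\<exists>u. u \<in> Mor C \<and> Dom C u = Dom C h \<and> Cod C u = Dom C (t2 \<cdot> t1) \<and> (t2 \<cdot> t1) \<cdot> u = h \<and> g1 \<cdot> u = k"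
      by (rule exI[of _ u1]) (use u1 u2 m ob comp_assoc[of u1 t1 t2] in simp)
  next
    fix u1 u2 assume a: "u1 \<in> Mor C" "u2 \<in> Mor C" "Dom C u2 = Dom C u1"
      "Cod C u1 = Dom C (t2 \<cdot> t1)" "Cod C u2 = Dom C (t2 \<cdot> t1)" "(t2 \<cdot> t1) \<cdot> u1 = (t2 \<cdot> t1) \<cdot> u2"
      "g1 \<cdot> u1 = g1 \<cdot> u2"
    have c1: "Cod C u1 = X1" "Cod C u2 = X1" using a m ob by auto
    have e1: "t2 \<cdot> t1 \<cdot> u1 = t2 \<cdot> t1 \<cdot> u2"
      using a(6) comp_assoc[of u1 t1 t2] comp_assoc[of u2 t1 t2] m ob c1 a by simp
    have "g2 \<cdot> t1 \<cdot> u1 = s1 \<cdot> g1 \<cdot> u1"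
      using comp_assoc[of u1 t1 g2] comp_assoc[of u1 g1 s1] m ob c1 a eq by simp
    also have "\<dots> = g2 \<cdot> t1 \<cdot> u2"
      using a(7) comp_assoc[of u2 t1 g2] comp_assoc[of u2 g1 s1] m ob c1 a eq by simp
    finally have e2: "g2 \<cdot> t1 \<cdot> u1 = g2 \<cdot> t1 \<cdot> u2" .
    have "t1 \<cdot> u1 = t1 \<cdot> u2"
      by (rule pullback_jointly_monic[OF right _ _ _ _ _ e1 e2]) (use m ob c1 a in auto)
    then show "u1 = u2"
      by (intro pullback_jointly_monic[OF left a(1-3) _ _ _ a(7)]) (use m ob c1 in auto)
  qed (use m ob c in auto)
qed

lemma is_pushoutD:
  "is_pushout C a b p q \<Longrightarrow> a \<in> Mor C \<and> b \<in> Mor C \<and> p \<in> Mor C \<and> q \<in> Mor C \<and>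
     Dom C a = Dom C b \<and> Dom C p = Cod C a \<and> Dom C q = Cod C b \<and> Cod C p = Cod C q \<and> p \<cdot> a = q \<cdot> b"
  unfolding is_pushout_def by blast

lemma pushout_factors:
  assumes po: "is_pushout C a b p q" and "h \<in> Mor C" "k \<in> Mor C" "Cod C k = Cod C h"
    "Dom C h = Cod C a" "Dom C k = Cod C b" "h \<cdot> a = k \<cdot> b"
  shows "\<exists>u. u \<in> Mor C \<and> Dom C u = Cod C p \<and> Cod C u = Cod C h \<and> u \<cdot> p = h \<and> u \<cdot> q = k"
proof -
  have "h \<in> hom C (Cod C a) (Cod C h)" "k \<in> hom C (Cod C b) (Cod C h)"
    using assms by (auto simp: hom_def)
  then have "\<exists>!u. u \<in> hom C (Cod C p) (Cod C h) \<and> u \<cdot> p = h \<and> u \<cdot> q = k"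
    using po assms unfolding is_pushout_def by simp
  then show ?thesis unfolding hom_def by blast
qed

lemma pushout_jointly_epic:
  assumes po: "is_pushout C a b p q" and u: "u1 \<in> Mor C" "u2 \<in> Mor C" "Cod C u2 = Cod C u1"
    "Dom C u1 = Cod C p" "Dom C u2 = Cod C p" and eq: "u1 \<cdot> p = u2 \<cdot> p" "u1 \<cdot> q = u2 \<cdot> q"
  shows "u1 = u2"
proof -
  note sq = is_pushoutD[OF po]
  have "(u1 \<cdot> p) \<cdot> a = (u1 \<cdot> q) \<cdot> b"
    using u sq comp_assoc[of a p u1] comp_assoc[of b q u1] by simp
  then have "\<exists>!u. u \<in> hom C (Cod C p) (Cod C u1) \<and> u \<cdot> p = u1 \<cdot> p \<and> u \<cdot> q = u1 \<cdot> q"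
    using po u sq unfolding is_pushout_def by (simp add: hom_def)
  moreover have "u1 \<in> hom C (Cod C p) (Cod C u1)" "u2 \<in> hom C (Cod C p) (Cod C u1)"
    using u by (auto simp: hom_def)
  ultimately show ?thesis using eq by metis
qed

end

locale preadditive_cat =
  fixes C :: "('o,'m,'x) addcat_scheme"
  assumes preadditive: "preadditive C"

sublocale preadditive_cat \<subseteq> cat
  using preadditive unfolding preadditive_def by unfold_locales blast

context preadditive_cat
begin

lemma Zm_in_Mor [simp]: "a \<in> Obj C \<Longrightarrow> b \<in> Obj C \<Longrightarrow> Zm C a b \<in> Mor C"
  and Dom_Zm [simp]: "a \<in> Obj C \<Longrightarrow> b \<in> Obj C \<Longrightarrow> Dom C (Zm C a b) = a"
  and Cod_Zm [simp]: "a \<in> Obj C \<Longrightarrow> b \<in> Obj C \<Longrightarrow> Cod C (Zm C a b) = b"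
  using preadditive unfolding preadditive_def hom_def by blast+

lemma hom_add: "f \<in> hom C a b \<Longrightarrow> g \<in> hom C a b \<Longrightarrow> Add C f g \<in> hom C a b \<and> Add C f g = Add C g f"
  using preadditive hom_objs unfolding preadditive_def by meson

lemma hom_add_assoc: "f \<in> hom C a b \<Longrightarrow> g \<in> hom C a b \<Longrightarrow> h \<in> hom C a b \<Longrightarrow>
  Add C (Add C f g) h = Add C f (Add C g h)"
  using preadditive hom_objs unfolding preadditive_def by meson

lemma hom_add_Zm: "f \<in> hom C a b \<Longrightarrow> Add C f (Zm C a b) = f"
  using preadditive hom_objs unfolding preadditive_def by meson

lemma hom_add_inverse: "f \<in> hom C a b \<Longrightarrow> \<exists>g\<in>hom C a b. Add C f g = Zm C a b"
  using preadditive hom_objs unfolding preadditive_def by meson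

lemma hom_comp_add_left: "f \<in> hom C a b \<Longrightarrow> g \<in> hom C a b \<Longrightarrow> h \<in> hom C b c \<Longrightarrow>
  h \<cdot> Add C f g = Add C (h \<cdot> f) (h \<cdot> g)"
  using preadditive hom_objs unfolding preadditive_def by meson

lemma hom_comp_add_right: "f \<in> hom C a b \<Longrightarrow> g \<in> hom C b c \<Longrightarrow> h \<in> hom C b c \<Longrightarrow>
  Add C g h \<cdot> f = Add C (g \<cdot> f) (h \<cdot> f)"
  using preadditive hom_objs unfolding preadditive_def by meson

lemma add_in_Mor [simp]:
    "f \<in> Mor C \<Longrightarrow> g \<in> Mor C \<Longrightarrow> Dom C g = Dom C f \<Longrightarrow> Cod C g = Cod C f \<Longrightarrow> Add C f g \<in> Mor C"
  and Dom_add [simp]: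
    "f \<in> Mor C \<Longrightarrow> g \<in> Mor C \<Longrightarrow> Dom C g = Dom C f \<Longrightarrow> Cod C g = Cod C f \<Longrightarrow> Dom C (Add C f g) = Dom C f"
  and Cod_add [simp]:
    "f \<in> Mor C \<Longrightarrow> g \<in> Mor C \<Longrightarrow> Dom C g = Dom C f \<Longrightarrow> Cod C g = Cod C f \<Longrightarrow> Cod C (Add C f g) = Cod C f"
  and add_comm:
    "f \<in> Mor C \<Longrightarrow> g \<in> Mor C \<Longrightarrow> Dom C g = Dom C f \<Longrightarrow> Cod C g = Cod C f \<Longrightarrow> Add C f g = Add C g f"
  using hom_add[of f "Dom C f" "Cod C f" g] by (auto simp: hom_def)

lemma add_assoc:
  "f \<in> Mor C \<Longrightarrow> g \<in> Mor C \<Longrightarrow> h \<in> Mor C \<Longrightarrow> Dom C g = Dom C f \<Longrightarrow> Cod C g = Cod C f \<Longrightarrow>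
   Dom C h = Dom C f \<Longrightarrow> Cod C h = Cod C f \<Longrightarrow> Add C (Add C f g) h = Add C f (Add C g h)"
  using hom_add_assoc[of f "Dom C f" "Cod C f" g h] by (auto simp: hom_def)

lemma add_Zm_right: "f \<in> Mor C \<Longrightarrow> Dom C f = a \<Longrightarrow> Cod C f = b \<Longrightarrow> Add C f (Zm C a b) = f"
  using hom_add_Zm[of f a b] by (auto simp: hom_def)

lemma add_Zm_left: "f \<in> Mor C \<Longrightarrow> Dom C f = a \<Longrightarrow> Cod C f = b \<Longrightarrow> Add C (Zm C a b) f = f"
  using add_comm[of f "Zm C a b"] add_Zm_right[of f a b] by auto

lemma comp_add_left:
  "f \<in> Mor C \<Longrightarrow> g \<in> Mor C \<Longrightarrow> h \<in> Mor C \<Longrightarrow> Dom C g = Dom C f \<Longrightarrow> Cod C g = Cod C f \<Longrightarrow>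
   Dom C h = Cod C f \<Longrightarrow> h \<cdot> Add C f g = Add C (h \<cdot> f) (h \<cdot> g)"
  using hom_comp_add_left[of f "Dom C f" "Cod C f" g h "Cod C h"] by (auto simp: hom_def)

lemma comp_add_right:
  "f \<in> Mor C \<Longrightarrow> g \<in> Mor C \<Longrightarrow> h \<in> Mor C \<Longrightarrow> Dom C g = Dom C f \<Longrightarrow> Cod C g = Cod C f \<Longrightarrow>
   Cod C h = Dom C f \<Longrightarrow> Add C f g \<cdot> h = Add C (f \<cdot> h) (g \<cdot> h)"
  using hom_comp_add_right[of h "Dom C h" "Dom C f" f "Cod C f" g] by (auto simp: hom_def)

definition neg :: "'m \<Rightarrow> 'm" where
  "neg f = (SOME g. g \<in> Mor C \<and> Dom C g = Dom C f \<and> Cod C g = Cod C f \<and>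
                    Add C f g = Zm C (Dom C f) (Cod C f))"

lemma neg_spec: "f \<in> Mor C \<Longrightarrow> neg f \<in> Mor C \<and> Dom C (neg f) = Dom C f \<and> Cod C (neg f) = Cod C f \<and>
    Add C f (neg f) = Zm C (Dom C f) (Cod C f)"
  unfolding neg_def
  by (rule someI_ex) (use hom_add_inverse[of f "Dom C f" "Cod C f"] in \<open>auto simp: hom_def\<close>)

lemma neg_in_Mor [simp]: "f \<in> Mor C \<Longrightarrow> neg f \<in> Mor C"
  and Dom_neg [simp]: "f \<in> Mor C \<Longrightarrow> Dom C (neg f) = Dom C f"
  and Cod_neg [simp]: "f \<in> Mor C \<Longrightarrow> Cod C (neg f) = Cod C f"
  and add_neg [simp]: "f \<in> Mor C \<Longrightarrow> Add C f (neg f) = Zm C (Dom C f) (Cod C f)"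
  using neg_spec by blast+

lemma add_inverse_unique:
  assumes "x \<in> Mor C" "y \<in> Mor C" "y' \<in> Mor C" "Dom C y = Dom C x" "Cod C y = Cod C x"
    "Dom C y' = Dom C x" "Cod C y' = Cod C x"
    "Add C x y = Zm C (Dom C x) (Cod C x)" "Add C x y' = Zm C (Dom C x) (Cod C x)"
  shows "y = y'"
proof -
  have "y = Add C y (Add C x y')" using assms add_Zm_right[of y] by simp
  also have "\<dots> = Add C (Add C x y) y'" using assms add_assoc[of y x y'] add_comm[of y x] by simp
  also have "\<dots> = y'" using assms add_Zm_left by simp
  finally show ?thesis .
qed

lemma eq_if_diff_Zm:
  assumes "f \<in> Mor C" "g \<in> Mor C" "Dom C g = Dom C f" "Cod C g = Cod C f"
    "Add C f (neg g) = Zm C (Dom C f) (Cod C f)"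
  shows "f = g"
proof -
  have "Add C (neg g) f = Zm C (Dom C g) (Cod C g)" "Add C (neg g) g = Zm C (Dom C g) (Cod C g)"
    using assms add_comm[of f "neg g"] add_comm[of g "neg g"] by simp_all
  then show ?thesis using add_inverse_unique[of "neg g" f g] assms by simp
qed

lemma Zm_if_add_self:
  assumes x: "x \<in> Mor C" "Add C x x = x"
  shows "x = Zm C (Dom C x) (Cod C x)"
proof -
  have "x = Add C x (Add C x (neg x))" using add_Zm_right[of x] x by simp
  also have "\<dots> = Add C x (neg x)" using x add_assoc[of x x "neg x"] by simp
  finally show ?thesis using x by simp
qed

lemma comp_Zm_right [simp]:
  assumes "h \<in> Mor C" "Dom C h = b" "a \<in> Obj C"
  shows "h \<cdot> Zm C a b = Zm C a (Cod C h)"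
proof -
  have "Add C (Zm C a b) (Zm C a b) = Zm C a b" using add_Zm_right[of "Zm C a b" a b] assms by auto
  then have "Add C (h \<cdot> Zm C a b) (h \<cdot> Zm C a b) = h \<cdot> Zm C a b"
    using comp_add_left[of "Zm C a b" "Zm C a b" h] assms by auto
  then show ?thesis using Zm_if_add_self[of "h \<cdot> Zm C a b"] assms by auto
qed

lemma comp_Zm_left [simp]:
  assumes "f \<in> Mor C" "Cod C f = b" "c \<in> Obj C"
  shows "Zm C b c \<cdot> f = Zm C (Dom C f) c"
proof -
  have "Add C (Zm C b c) (Zm C b c) = Zm C b c" using add_Zm_right[of "Zm C b c" b c] assms by auto
  then have "Add C (Zm C b c \<cdot> f) (Zm C b c \<cdot> f) = Zm C b c \<cdot> f"
    using comp_add_right[of "Zm C b c" "Zm C b c" f] assms by auto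
  then show ?thesis using Zm_if_add_self[of "Zm C b c \<cdot> f"] assms by auto
qed

lemma comp_neg_left: "g \<in> Mor C \<Longrightarrow> h \<in> Mor C \<Longrightarrow> Dom C h = Cod C g \<Longrightarrow> h \<cdot> neg g = neg (h \<cdot> g)"
  using comp_add_left[of g "neg g" h] add_inverse_unique[of "h \<cdot> g" "h \<cdot> neg g" "neg (h \<cdot> g)"] by simp

lemma comp_neg_right: "g \<in> Mor C \<Longrightarrow> h \<in> Mor C \<Longrightarrow> Cod C h = Dom C g \<Longrightarrow> neg g \<cdot> h = neg (g \<cdot> h)"
  using comp_add_right[of g "neg g" h] add_inverse_unique[of "g \<cdot> h" "neg g \<cdot> h" "neg (g \<cdot> h)"] by simp

lemma comp_diff_left:
  "f \<in> Mor C \<Longrightarrow> g \<in> Mor C \<Longrightarrow> h \<in> Mor C \<Longrightarrow> Dom C g = Dom C f \<Longrightarrow> Cod C g = Cod C f \<Longrightarrow>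
   Dom C h = Cod C f \<Longrightarrow> h \<cdot> Add C f (neg g) = Add C (h \<cdot> f) (neg (h \<cdot> g))"
  using comp_add_left[of f "neg g" h] comp_neg_left[of g h] by simp

lemma comp_diff_right:
  "f \<in> Mor C \<Longrightarrow> g \<in> Mor C \<Longrightarrow> h \<in> Mor C \<Longrightarrow> Dom C g = Dom C f \<Longrightarrow> Cod C g = Cod C f \<Longrightarrow>
   Cod C h = Dom C f \<Longrightarrow> Add C f (neg g) \<cdot> h = Add C (f \<cdot> h) (neg (g \<cdot> h))"
  using comp_add_right[of f "neg g" h] comp_neg_right[of g h] by simp

lemma neg_Zm [simp]: "a \<in> Obj C \<Longrightarrow> b \<in> Obj C \<Longrightarrow> neg (Zm C a b) = Zm C a b"
  using add_inverse_unique[of "Zm C a b" "Zm C a b" "neg (Zm C a b)"] add_Zm_right[of "Zm C a b" a b] by simp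

section \<open>Kernels and cokernels\<close>

lemma is_kernelD:
  "is_kernel C f g \<Longrightarrow> f \<in> Mor C \<and> g \<in> Mor C \<and> Cod C f = Dom C g \<and> g \<cdot> f = Zm C (Dom C f) (Cod C g)"
  unfolding is_kernel_def by blast

lemma is_cokernelD:
  "is_cokernel C g f \<Longrightarrow> f \<in> Mor C \<and> g \<in> Mor C \<and> Cod C f = Dom C g \<and> g \<cdot> f = Zm C (Dom C f) (Cod C g)"
  unfolding is_cokernel_def by blast

lemma kernel_factors:
  "is_kernel C f g \<Longrightarrow> h \<in> Mor C \<Longrightarrow> Cod C h = Dom C g \<Longrightarrow> g \<cdot> h = Zm C (Dom C h) (Cod C g) \<Longrightarrow>
   \<exists>u. u \<in> Mor C \<and> Dom C u = Dom C h \<and> Cod C u = Dom C f \<and> f \<cdot> u = h"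
  unfolding is_kernel_def hom_def by (metis (mono_tags, lifting) dom_in_Obj mem_Collect_eq)

lemma cokernel_factors:
  "is_cokernel C g f \<Longrightarrow> h \<in> Mor C \<Longrightarrow> Dom C h = Cod C f \<Longrightarrow> h \<cdot> f = Zm C (Dom C f) (Cod C h) \<Longrightarrow>
   \<exists>u. u \<in> Mor C \<and> Dom C u = Cod C g \<and> Cod C u = Cod C h \<and> u \<cdot> g = h"
  unfolding is_cokernel_def hom_def by (metis (mono_tags, lifting) cod_in_Obj mem_Collect_eq)

lemma kernel_cancel:
  assumes ker: "is_kernel C f g" and u: "u1 \<in> Mor C" "u2 \<in> Mor C" "Dom C u2 = Dom C u1"
    "Cod C u1 = Dom C f" "Cod C u2 = Dom C f" and eq: "f \<cdot> u1 = f \<cdot> u2"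
  shows "u1 = u2"
proof -
  note fg = is_kernelD[OF ker]
  have "f \<cdot> u1 \<in> hom C (Dom C u1) (Dom C g)" using u fg by (auto simp: hom_def)
  moreover have "g \<cdot> f \<cdot> u1 = Zm C (Dom C u1) (Cod C g)" using u fg comp_assoc[of u1 f g] by simp
  ultimately have "\<exists>!u. u \<in> hom C (Dom C u1) (Dom C f) \<and> f \<cdot> u = f \<cdot> u1"
    using ker u unfolding is_kernel_def by auto
  then show ?thesis using u eq by (auto simp: hom_def)
qed

lemma cokernel_cancel:
  assumes coker: "is_cokernel C g f" and u: "u1 \<in> Mor C" "u2 \<in> Mor C" "Cod C u2 = Cod C u1"
    "Dom C u1 = Cod C g" "Dom C u2 = Cod C g" and eq: "u1 \<cdot> g = u2 \<cdot> g"
  shows "u1 = u2"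
proof -
  note fg = is_cokernelD[OF coker]
  have "u1 \<cdot> g \<in> hom C (Cod C f) (Cod C u1)" using u fg by (auto simp: hom_def)
  moreover have "(u1 \<cdot> g) \<cdot> f = Zm C (Dom C f) (Cod C u1)" using u fg comp_assoc[of f g u1] by simp
  ultimately have "\<exists>!u. u \<in> hom C (Cod C g) (Cod C u1) \<and> u \<cdot> g = u1 \<cdot> g"
    using coker u unfolding is_cokernel_def by auto
  then show ?thesis using u eq by (auto simp: hom_def)
qed

lemma is_kernelI:
  assumes "f \<in> Mor C" "g \<in> Mor C" "Cod C f = Dom C g" "g \<cdot> f = Zm C (Dom C f) (Cod C g)"
    and factor: "\<And>h. h \<in> Mor C \<Longrightarrow> Cod C h = Dom C g \<Longrightarrow> g \<cdot> h = Zm C (Dom C h) (Cod C g) \<Longrightarrow>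
      \<exists>u. u \<in> Mor C \<and> Dom C u = Dom C h \<and> Cod C u = Dom C f \<and> f \<cdot> u = h"
    and unique: "\<And>u1 u2. u1 \<in> Mor C \<Longrightarrow> u2 \<in> Mor C \<Longrightarrow> Dom C u2 = Dom C u1 \<Longrightarrow>
      Cod C u1 = Dom C f \<Longrightarrow> Cod C u2 = Dom C f \<Longrightarrow> f \<cdot> u1 = f \<cdot> u2 \<Longrightarrow> u1 = u2"
  shows "is_kernel C f g"
  unfolding is_kernel_def
proof (intro conjI ballI impI)
  fix x h assume x: "x \<in> Obj C" "h \<in> hom C x (Dom C g)" "g \<cdot> h = Zm C x (Cod C g)"
  then obtain u where u: "u \<in> Mor C" "Dom C u = Dom C h" "Cod C u = Dom C f" "f \<cdot> u = h"
    using factor[of h] unfolding hom_def by auto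
  show "\<exists>!u. u \<in> hom C x (Dom C f) \<and> f \<cdot> u = h"
  proof (rule ex1I[of _ u])
    show "u \<in> hom C x (Dom C f) \<and> f \<cdot> u = h" using u x unfolding hom_def by auto
    fix u' assume "u' \<in> hom C x (Dom C f) \<and> f \<cdot> u' = h"
    then show "u' = u" using unique[of u' u] u x unfolding hom_def by auto
  qed
qed (use assms in auto)

lemma is_cokernelI:
  assumes "f \<in> Mor C" "g \<in> Mor C" "Cod C f = Dom C g" "g \<cdot> f = Zm C (Dom C f) (Cod C g)"
    and factor: "\<And>h. h \<in> Mor C \<Longrightarrow> Dom C h = Cod C f \<Longrightarrow> h \<cdot> f = Zm C (Dom C f) (Cod C h) \<Longrightarrow>
      \<exists>u. u \<in> Mor C \<and> Dom C u = Cod C g \<and> Cod C u = Cod C h \<and> u \<cdot> g = h"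
    and unique: "\<And>u1 u2. u1 \<in> Mor C \<Longrightarrow> u2 \<in> Mor C \<Longrightarrow> Cod C u2 = Cod C u1 \<Longrightarrow>
      Dom C u1 = Cod C g \<Longrightarrow> Dom C u2 = Cod C g \<Longrightarrow> u1 \<cdot> g = u2 \<cdot> g \<Longrightarrow> u1 = u2"
  shows "is_cokernel C g f"
  unfolding is_cokernel_def
proof (intro conjI ballI impI)
  fix x h assume x: "x \<in> Obj C" "h \<in> hom C (Cod C f) x" "h \<cdot> f = Zm C (Dom C f) x"
  then obtain u where u: "u \<in> Mor C" "Dom C u = Cod C g" "Cod C u = Cod C h" "u \<cdot> g = h"
    using factor[of h] unfolding hom_def by auto
  show "\<exists>!u. u \<in> hom C (Cod C g) x \<and> u \<cdot> g = h"
  proof (rule ex1I[of _ u])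
    show "u \<in> hom C (Cod C g) x \<and> u \<cdot> g = h" using u x unfolding hom_def by auto
    fix u' assume "u' \<in> hom C (Cod C g) x \<and> u' \<cdot> g = h"
    then show "u' = u" using unique[of u' u] u x unfolding hom_def by auto
  qed
qed (use assms in auto)

lemma kernels_iso:
  assumes k: "is_kernel C f g" and k': "is_kernel C f' g"
  shows "\<exists>\<alpha> \<alpha>'. inverses \<alpha> \<alpha>' \<and> Dom C \<alpha> = Dom C f' \<and> Cod C \<alpha> = Dom C f \<and> f' = f \<cdot> \<alpha>"
proof -
  note b = is_kernelD[OF k] and b' = is_kernelD[OF k']
  obtain \<alpha> where \<alpha>: "\<alpha> \<in> Mor C" "Dom C \<alpha> = Dom C f'" "Cod C \<alpha> = Dom C f" "f \<cdot> \<alpha> = f'"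
    using kernel_factors[OF k, of f'] b b' by auto
  obtain \<alpha>' where \<alpha>': "\<alpha>' \<in> Mor C" "Dom C \<alpha>' = Dom C f" "Cod C \<alpha>' = Dom C f'" "f' \<cdot> \<alpha>' = f"
    using kernel_factors[OF k', of f] b b' by auto
  have "\<alpha>' \<cdot> \<alpha> = Id C (Dom C \<alpha>)"
    by (rule kernel_cancel[OF k']) (use \<alpha> \<alpha>' b b' comp_assoc[of \<alpha> \<alpha>' f'] in auto)
  moreover have "\<alpha> \<cdot> \<alpha>' = Id C (Cod C \<alpha>)"
    by (rule kernel_cancel[OF k]) (use \<alpha> \<alpha>' b b' comp_assoc[of \<alpha>' \<alpha> f] in auto)
  ultimately have "inverses \<alpha> \<alpha>'" using \<alpha> \<alpha>' unfolding inverses_def by auto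
  then show ?thesis using \<alpha> by blast
qed

lemma cokernels_iso:
  assumes c: "is_cokernel C g f" and c': "is_cokernel C g' f"
  shows "\<exists>\<gamma> \<gamma>'. inverses \<gamma> \<gamma>' \<and> Dom C \<gamma> = Cod C g \<and> Cod C \<gamma> = Cod C g' \<and> g' = \<gamma> \<cdot> g"
proof -
  note b = is_cokernelD[OF c] and b' = is_cokernelD[OF c']
  obtain \<gamma> where \<gamma>: "\<gamma> \<in> Mor C" "Dom C \<gamma> = Cod C g" "Cod C \<gamma> = Cod C g'" "\<gamma> \<cdot> g = g'"
    using cokernel_factors[OF c, of g'] b b' by auto
  obtain \<gamma>' where \<gamma>': "\<gamma>' \<in> Mor C" "Dom C \<gamma>' = Cod C g'" "Cod C \<gamma>' = Cod C g" "\<gamma>' \<cdot> g' = g"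
    using cokernel_factors[OF c', of g] b b' by auto
  have "\<gamma>' \<cdot> \<gamma> = Id C (Dom C \<gamma>)"
    by (rule cokernel_cancel[OF c]) (use \<gamma> \<gamma>' b b' comp_assoc[of g \<gamma> \<gamma>'] in auto)
  moreover have "\<gamma> \<cdot> \<gamma>' = Id C (Cod C \<gamma>)"
    by (rule cokernel_cancel[OF c']) (use \<gamma> \<gamma>' b b' comp_assoc[of g' \<gamma>' \<gamma>] in auto)
  ultimately have "inverses \<gamma> \<gamma>'" using \<gamma> \<gamma>' unfolding inverses_def by auto
  then show ?thesis using \<gamma> by blast
qed

lemma kernel_comp_pullback:
  assumes pb: "is_pullback C k2 d1 \<delta> \<iota>" and ker: "is_kernel C k2 d2" and c: "Cod C d1 = Dom C d2"
  shows "is_kernel C \<iota> (d2 \<cdot> d1)"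
proof -
  note sq = is_pullbackD[OF pb] and kd = is_kernelD[OF ker]
  obtain P X Y Z K2 where ob: "Dom C \<delta> = P" "Dom C \<iota> = P" "Cod C \<delta> = K2" "Dom C k2 = K2" "Cod C \<iota> = X"
    "Dom C d1 = X" "Cod C d1 = Y" "Cod C k2 = Y" "Dom C d2 = Y" "Cod C d2 = Z"
    using sq kd c by metis
  have m: "k2 \<in> Mor C" "d1 \<in> Mor C" "\<delta> \<in> Mor C" "\<iota> \<in> Mor C" "d2 \<in> Mor C" using sq kd by auto
  have obj: "P \<in> Obj C" "Z \<in> Obj C" using ob m dom_in_Obj cod_in_Obj by metis+
  have eq: "k2 \<cdot> \<delta> = d1 \<cdot> \<iota>" "d2 \<cdot> k2 = Zm C K2 Z" using sq kd ob by auto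
  show ?thesis
  proof (rule is_kernelI)
    have "(d2 \<cdot> d1) \<cdot> \<iota> = (d2 \<cdot> k2) \<cdot> \<delta>"
      using eq comp_assoc[of \<iota> d1 d2] comp_assoc[of \<delta> k2 d2] m ob by simp
    then show "(d2 \<cdot> d1) \<cdot> \<iota> = Zm C (Dom C \<iota>) (Cod C (d2 \<cdot> d1))" using eq m ob obj by simp
  next
    fix h assume h: "h \<in> Mor C" "Cod C h = Dom C (d2 \<cdot> d1)" "(d2 \<cdot> d1) \<cdot> h = Zm C (Dom C h) (Cod C (d2 \<cdot> d1))"
    have h': "Cod C h = X" "d2 \<cdot> d1 \<cdot> h = Zm C (Dom C h) Z" using h m ob comp_assoc[of h d1 d2] by auto
    obtain v where v: "v \<in> Mor C" "Dom C v = Dom C h" "Cod C v = K2" "k2 \<cdot> v = d1 \<cdot> h"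
      using kernel_factors[OF ker, of "d1 \<cdot> h"] h h' m ob by auto
    obtain u where "u \<in> Mor C" "Dom C u = Dom C h" "Cod C u = P" "\<iota> \<cdot> u = h"
      using pullback_factors[OF pb, of v h] v h h' m ob by auto
    then show "\<exists>u. u \<in> Mor C \<and> Dom C u = Dom C h \<and> Cod C u = Dom C \<iota> \<and> \<iota> \<cdot> u = h"
      using ob by auto
  next
    fix u1 u2 assume u: "u1 \<in> Mor C" "u2 \<in> Mor C" "Dom C u2 = Dom C u1" "Cod C u1 = Dom C \<iota>"
      "Cod C u2 = Dom C \<iota>" "\<iota> \<cdot> u1 = \<iota> \<cdot> u2"
    have "k2 \<cdot> \<delta> \<cdot> u1 = k2 \<cdot> \<delta> \<cdot> u2"
      using comp_assoc[of u1 \<delta> k2] comp_assoc[of u2 \<delta> k2] comp_assoc[of u1 \<iota> d1] comp_assoc[of u2 \<iota> d1]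
        u eq m ob by simp
    then have "\<delta> \<cdot> u1 = \<delta> \<cdot> u2" by (rule kernel_cancel[OF ker, rotated -1]) (use u m ob in auto)
    then show "u1 = u2" by (intro pullback_jointly_monic[OF pb u(1-3) _ _ _ u(6)]) (use u ob in auto)
  qed (use m ob c in auto)
qed

lemma Id_Zm_pullback:
  assumes "Y \<in> Obj C" "z \<in> Obj C"
  shows "is_pullback C (Zm C Y z) (Id C z) (Id C Y) (Zm C Y z)"
proof (rule is_pullbackI)
  fix h k assume "h \<in> Mor C" "k \<in> Mor C" "Dom C k = Dom C h" "Cod C h = Dom C (Zm C Y z)"
    "Cod C k = Dom C (Id C z)" "Zm C Y z \<cdot> h = Id C z \<cdot> k"
  then show "\<exists>u. u \<in> Mor C \<and> Dom C u = Dom C h \<and> Cod C u = Dom C (Id C Y) \<and> Id C Y \<cdot> u = h \<and>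
      Zm C Y z \<cdot> u = k"
    using assms by (intro exI[of _ h]) simp
next
  fix u1 u2 assume "u1 \<in> Mor C" "u2 \<in> Mor C" "Cod C u1 = Dom C (Id C Y)" "Cod C u2 = Dom C (Id C Y)"
    "Id C Y \<cdot> u1 = Id C Y \<cdot> u2"
  then show "u1 = u2" using assms by (metis Dom_Id comp_Id_left)
qed (use assms in simp_all)

lemma Id_is_kernel_of_Zm:
  assumes "Y \<in> Obj C" "a \<in> Obj C"
  shows "is_kernel C (Id C Y) (Zm C Y a)"
proof (rule is_kernelI)
  fix h assume "h \<in> Mor C" "Cod C h = Dom C (Zm C Y a)"
  then show "\<exists>u. u \<in> Mor C \<and> Dom C u = Dom C h \<and> Cod C u = Dom C (Id C Y) \<and> Id C Y \<cdot> u = h"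
    using assms by (intro exI[of _ h]) simp
next
  fix u1 u2 assume "u1 \<in> Mor C" "u2 \<in> Mor C" "Cod C u1 = Dom C (Id C Y)" "Cod C u2 = Dom C (Id C Y)"
    "Id C Y \<cdot> u1 = Id C Y \<cdot> u2"
  then show "u1 = u2" using assms by (metis Dom_Id comp_Id_left)
qed (use assms in simp_all)

lemma Zm_is_kernel_of_Id:
  assumes z: "z \<in> Obj C" "Id C z = Zm C z z" and Y: "Y \<in> Obj C"
  shows "is_kernel C (Zm C z Y) (Id C Y)"
proof (rule is_kernelI)
  fix h assume "h \<in> Mor C" "Cod C h = Dom C (Id C Y)" "Id C Y \<cdot> h = Zm C (Dom C h) (Cod C (Id C Y))"
  then show "\<exists>u. u \<in> Mor C \<and> Dom C u = Dom C h \<and> Cod C u = Dom C (Zm C z Y) \<and> Zm C z Y \<cdot> u = h"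
    using z Y by (intro exI[of _ "Zm C (Dom C h) z"]) simp
next
  have to_z: "u = Zm C (Dom C u) z" if "u \<in> Mor C" "Cod C u = z" for u
    using that z comp_Id_left[of u z] by simp
  fix u1 u2 assume "u1 \<in> Mor C" "u2 \<in> Mor C" "Dom C u2 = Dom C u1"
    "Cod C u1 = Dom C (Zm C z Y)" "Cod C u2 = Dom C (Zm C z Y)"
  then show "u1 = u2" using z Y to_z[of u1] to_z[of u2] by simp
qed (use z Y in simp_all)

lemma Id_Zm_if_kernel_of_Id:
  assumes ker: "is_kernel C k (Id C Y)" and Y: "Y \<in> Obj C"
  shows "Id C (Dom C k) = Zm C (Dom C k) (Dom C k)"
proof -
  note kd = is_kernelD[OF ker]
  obtain K where K: "Dom C k = K" by blast
  then have K_obj: "K \<in> Obj C" using kd dom_in_Obj by blast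
  have k: "k = Zm C K Y" using kd K Y comp_Id_left[of k Y] by auto
  have "Id C K = Zm C K K"
    by (rule kernel_cancel[OF ker]) (use kd K K_obj k Y in simp_all)
  then show ?thesis using K by simp
qed

lemma pullback_kernel:
  assumes pb: "is_pullback C f d d' f'" and ker: "is_kernel C k d"
  shows "\<exists>v. v \<in> Mor C \<and> Dom C v = Dom C k \<and> Cod C v = Dom C d' \<and> f' \<cdot> v = k \<and> is_kernel C v d'"
proof -
  note sq = is_pullbackD[OF pb] and kd = is_kernelD[OF ker]
  obtain K X Y W where ob: "Dom C k = K" "Dom C d' = X" "Dom C f = Y" "Cod C f = W"
    using sq kd by metis
  have obj: "K \<in> Obj C" "X \<in> Obj C" "Y \<in> Obj C" using sq kd ob dom_in_Obj by metis+
  obtain v where v: "v \<in> Mor C" "Dom C v = K" "Cod C v = X" "d' \<cdot> v = Zm C K Y" "f' \<cdot> v = k"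
    using pullback_factors[OF pb, of "Zm C K Y" k] sq kd ob obj by auto
  have "is_kernel C v d'"
  proof (rule is_kernelI)
    fix h assume h: "h \<in> Mor C" "Cod C h = Dom C d'" "d' \<cdot> h = Zm C (Dom C h) (Cod C d')"
    have "d \<cdot> f' \<cdot> h = f \<cdot> d' \<cdot> h" using h sq comp_assoc[of h f' d] comp_assoc[of h d' f] by simp
    then have "d \<cdot> f' \<cdot> h = Zm C (Dom C h) (Cod C d)" using h sq ob by simp
    then obtain u where u: "u \<in> Mor C" "Dom C u = Dom C h" "Cod C u = K" "k \<cdot> u = f' \<cdot> h"
      using kernel_factors[OF ker, of "f' \<cdot> h"] h sq ob by auto
    have "v \<cdot> u = h"
      by (rule pullback_jointly_monic[OF pb])
        (use u v h sq ob obj comp_assoc[of u v d'] comp_assoc[of u v f'] in auto)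
    then show "\<exists>u. u \<in> Mor C \<and> Dom C u = Dom C h \<and> Cod C u = Dom C v \<and> v \<cdot> u = h"
      using u v by auto
  next
    fix u1 u2 assume u: "u1 \<in> Mor C" "u2 \<in> Mor C" "Dom C u2 = Dom C u1" "Cod C u1 = Dom C v"
      "Cod C u2 = Dom C v" "v \<cdot> u1 = v \<cdot> u2"
    then have "k \<cdot> u1 = k \<cdot> u2"
      using u v sq ob comp_assoc[of u1 v f'] comp_assoc[of u2 v f'] by (metis (no_types))
    then show "u1 = u2" by (rule kernel_cancel[OF ker, rotated -1]) (use u v ob in auto)
  qed (use v sq ob obj in auto)
  then show ?thesis using v ob by auto
qed

lemma kernel_pullback:
  assumes ki: "is_kernel C i p" and kt: "is_kernel C t (p \<cdot> f)" and f: "f \<in> Mor C" "Cod C f = Dom C p"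
    and g: "g \<in> Mor C" "Dom C g = Dom C t" "Cod C g = Dom C i" and sq: "i \<cdot> g = f \<cdot> t"
  shows "is_pullback C f i t g"
proof -
  note ip = is_kernelD[OF ki] and tpf = is_kernelD[OF kt]
  show ?thesis
  proof (rule is_pullbackI)
    fix h k assume a: "h \<in> Mor C" "k \<in> Mor C" "Dom C k = Dom C h" "Cod C h = Dom C f"
      "Cod C k = Dom C i" "f \<cdot> h = i \<cdot> k"
    have "(p \<cdot> f) \<cdot> h = (p \<cdot> i) \<cdot> k" using a f ip comp_assoc[of h f p] comp_assoc[of k i p] by simp
    then have "(p \<cdot> f) \<cdot> h = Zm C (Dom C h) (Cod C (p \<cdot> f))" using a f ip by simp
    then obtain u where u: "u \<in> Mor C" "Dom C u = Dom C h" "Cod C u = Dom C t" "t \<cdot> u = h"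
      using kernel_factors[OF kt, of h] a f ip by auto
    have "i \<cdot> g \<cdot> u = i \<cdot> k"
      using u a sq g f ip tpf comp_assoc[of u g i] comp_assoc[of u t f] by simp
    then have "g \<cdot> u = k" by (rule kernel_cancel[OF ki, rotated -1]) (use u a g in auto)
    then show "\<exists>u. u \<in> Mor C \<and> Dom C u = Dom C h \<and> Cod C u = Dom C t \<and> t \<cdot> u = h \<and> g \<cdot> u = k"
      using u by auto
  next
    fix u1 u2 assume "u1 \<in> Mor C" "u2 \<in> Mor C" "Dom C u2 = Dom C u1" "Cod C u1 = Dom C t"
      "Cod C u2 = Dom C t" "t \<cdot> u1 = t \<cdot> u2"
    then show "u1 = u2" by (rule kernel_cancel[OF kt])
  qed (use ip tpf f g sq in auto)
qed

lemma kernel_comp_monic: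
  assumes kt: "is_kernel C t e" and kj: "is_kernel C j c" and c: "Cod C e = Dom C j"
  shows "is_kernel C t (j \<cdot> e)"
proof (rule is_kernelI)
  note te = is_kernelD[OF kt] and jc = is_kernelD[OF kj]
  show "(j \<cdot> e) \<cdot> t = Zm C (Dom C t) (Cod C (j \<cdot> e))"
    using te jc c comp_assoc[of t e j] by simp
  fix h assume h: "h \<in> Mor C" "Cod C h = Dom C (j \<cdot> e)" "(j \<cdot> e) \<cdot> h = Zm C (Dom C h) (Cod C (j \<cdot> e))"
  have "j \<cdot> e \<cdot> h = j \<cdot> Zm C (Dom C h) (Cod C e)"
    using h te jc c comp_assoc[of h e j] by simp
  then have "e \<cdot> h = Zm C (Dom C h) (Cod C e)"
    by (rule kernel_cancel[OF kj, rotated -1]) (use h te jc c in auto)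
  then show "\<exists>u. u \<in> Mor C \<and> Dom C u = Dom C h \<and> Cod C u = Dom C t \<and> t \<cdot> u = h"
    using kernel_factors[OF kt, of h] h te jc c by auto
next
  fix u1 u2 assume "u1 \<in> Mor C" "u2 \<in> Mor C" "Dom C u2 = Dom C u1" "Cod C u1 = Dom C t"
    "Cod C u2 = Dom C t" "t \<cdot> u1 = t \<cdot> u2"
  then show "u1 = u2" by (rule kernel_cancel[OF kt])
qed (use is_kernelD[OF kt] is_kernelD[OF kj] c in auto)

lemma cancel_if_trivial_kernel:
  assumes f: "f \<in> Mor C"
    and triv: "\<And>u. u \<in> Mor C \<Longrightarrow> Cod C u = Dom C f \<Longrightarrow> f \<cdot> u = Zm C (Dom C u) (Cod C f) \<Longrightarrow>
      u = Zm C (Dom C u) (Dom C f)"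
    and u: "u1 \<in> Mor C" "u2 \<in> Mor C" "Dom C u2 = Dom C u1" "Cod C u1 = Dom C f" "Cod C u2 = Dom C f"
    and eq: "f \<cdot> u1 = f \<cdot> u2"
  shows "u1 = u2"
proof -
  let ?d = "Add C u1 (neg u2)"
  have d: "?d \<in> Mor C" "Dom C ?d = Dom C u1" "Cod C ?d = Dom C f" using u by simp_all
  have "f \<cdot> ?d = Add C (f \<cdot> u1) (neg (f \<cdot> u2))"
    by (rule comp_diff_left) (use f u in simp_all)
  also have "\<dots> = Zm C (Dom C u1) (Cod C f)"
    unfolding eq using add_neg[of "f \<cdot> u2"] f u by simp
  finally have "f \<cdot> ?d = Zm C (Dom C u1) (Cod C f)" .
  then have "?d = Zm C (Dom C u1) (Cod C u1)" using triv[OF d(1) d(3)] d(2) u(4) by argo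
  then show ?thesis by (rule eq_if_diff_Zm[rotated -1]) (use u in simp_all)
qed

lemma pushout_induced_cokernel:
  assumes po: "is_pushout C k e \<pi> q" and coker: "is_cokernel C d k"
  obtains r where "r \<in> Mor C" "Dom C r = Cod C \<pi>" "Cod C r = Cod C d" "r \<cdot> \<pi> = d"
    "r \<cdot> q = Zm C (Dom C q) (Cod C d)" "is_cokernel C r q"
proof -
  note sq = is_pushoutD[OF po] and kd = is_cokernelD[OF coker]
  obtain K Y A P Z where ob: "Dom C k = K" "Dom C e = K" "Cod C k = Y" "Dom C \<pi> = Y" "Dom C d = Y"
    "Cod C e = A" "Dom C q = A" "Cod C \<pi> = P" "Cod C q = P" "Cod C d = Z"
    using sq kd by metis
  have obj: "K \<in> Obj C" "A \<in> Obj C" "Z \<in> Obj C" using sq kd ob dom_in_Obj cod_in_Obj by metis+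
  obtain r where r: "r \<in> Mor C" "Dom C r = P" "Cod C r = Z" "r \<cdot> \<pi> = d" "r \<cdot> q = Zm C A Z"
    using pushout_factors[OF po, of d "Zm C A Z"] sq kd ob obj by auto
  have "is_cokernel C r q"
  proof (rule is_cokernelI)
    fix h assume h: "h \<in> Mor C" "Dom C h = Cod C q" "h \<cdot> q = Zm C (Dom C q) (Cod C h)"
    have "(h \<cdot> \<pi>) \<cdot> k = (h \<cdot> q) \<cdot> e" using h sq ob comp_assoc[of k \<pi> h] comp_assoc[of e q h] by simp
    then have "(h \<cdot> \<pi>) \<cdot> k = Zm C (Dom C k) (Cod C (h \<cdot> \<pi>))" using h sq ob obj by simp
    then obtain u where u: "u \<in> Mor C" "Dom C u = Z" "Cod C u = Cod C h" "u \<cdot> d = h \<cdot> \<pi>"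
      using cokernel_factors[OF coker, of "h \<cdot> \<pi>"] h sq ob by auto
    have "u \<cdot> r = h"
      by (rule pushout_jointly_epic[OF po])
        (use u r h sq ob obj comp_assoc[of \<pi> r u] comp_assoc[of q r u] in auto)
    then show "\<exists>u. u \<in> Mor C \<and> Dom C u = Cod C r \<and> Cod C u = Cod C h \<and> u \<cdot> r = h"
      using u r by auto
  next
    fix u1 u2 assume u: "u1 \<in> Mor C" "u2 \<in> Mor C" "Cod C u2 = Cod C u1" "Dom C u1 = Cod C r"
      "Dom C u2 = Cod C r" "u1 \<cdot> r = u2 \<cdot> r"
    have "u1 \<cdot> d = u2 \<cdot> d"
      using u r sq ob comp_assoc[of \<pi> r u1] comp_assoc[of \<pi> r u2] by (metis (no_types))
    then show "u1 = u2" by (rule cokernel_cancel[OF coker, rotated -1]) (use u r ob in auto)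
  qed (use r sq ob obj in auto)
  then show thesis using that r ob by auto
qed

lemma pushout_kernel_comp:
  assumes po: "is_pushout C k e \<pi> q" and kt: "is_kernel C t e" and kk: "is_kernel C k d"
    and kq: "is_kernel C q r" and r: "r \<in> Mor C" "Dom C r = Cod C \<pi>" "r \<cdot> \<pi> = d"
  shows "is_kernel C (k \<cdot> t) \<pi>"
proof -
  note sq = is_pushoutD[OF po] and te = is_kernelD[OF kt] and kd = is_kernelD[OF kk]
  obtain T K Y A P where ob: "Dom C t = T" "Cod C t = K" "Dom C k = K" "Dom C e = K" "Cod C k = Y"
    "Dom C \<pi> = Y" "Cod C e = A" "Dom C q = A" "Cod C \<pi> = P" "Cod C q = P"
    using sq te by metis
  have obj: "T \<in> Obj C" "A \<in> Obj C" "P \<in> Obj C" using sq te ob dom_in_Obj cod_in_Obj by metis+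
  show ?thesis
  proof (rule is_kernelI)
    have "\<pi> \<cdot> k \<cdot> t = q \<cdot> e \<cdot> t" using sq te ob comp_assoc[of t k \<pi>] comp_assoc[of t e q] by simp
    then show "\<pi> \<cdot> k \<cdot> t = Zm C (Dom C (k \<cdot> t)) (Cod C \<pi>)" using sq te ob obj by simp
  next
    fix h assume h: "h \<in> Mor C" "Cod C h = Dom C \<pi>" "\<pi> \<cdot> h = Zm C (Dom C h) (Cod C \<pi>)"
    have "d \<cdot> h = Zm C (Dom C h) (Cod C d)" using h r sq ob comp_assoc[of h \<pi> r] by auto
    then obtain y where y: "y \<in> Mor C" "Dom C y = Dom C h" "Cod C y = K" "k \<cdot> y = h"
      using kernel_factors[OF kk, of h] h kd ob sq by auto
    have "q \<cdot> e \<cdot> y = \<pi> \<cdot> h" using y sq ob comp_assoc[of y e q] comp_assoc[of y k \<pi>] by simp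
    then have "q \<cdot> e \<cdot> y = q \<cdot> Zm C (Dom C h) A" using h sq ob obj by simp
    then have "e \<cdot> y = Zm C (Dom C h) A"
      by (rule kernel_cancel[OF kq, rotated -1]) (use y h sq ob obj in auto)
    then obtain w where w: "w \<in> Mor C" "Dom C w = Dom C h" "Cod C w = T" "t \<cdot> w = y"
      using kernel_factors[OF kt, of y] y te ob sq by auto
    show "\<exists>u. u \<in> Mor C \<and> Dom C u = Dom C h \<and> Cod C u = Dom C (k \<cdot> t) \<and> (k \<cdot> t) \<cdot> u = h"
      by (rule exI[of _ w]) (use w y te sq ob comp_assoc[of w t k] in simp)
  next
    fix u1 u2 assume u: "u1 \<in> Mor C" "u2 \<in> Mor C" "Dom C u2 = Dom C u1" "Cod C u1 = Dom C (k \<cdot> t)"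
      "Cod C u2 = Dom C (k \<cdot> t)" "(k \<cdot> t) \<cdot> u1 = (k \<cdot> t) \<cdot> u2"
    have c: "Cod C u1 = T" "Cod C u2 = T" using u te sq ob by auto
    have "k \<cdot> t \<cdot> u1 = k \<cdot> t \<cdot> u2"
      using u c te sq ob comp_assoc[of u1 t k] comp_assoc[of u2 t k] by simp
    then have "t \<cdot> u1 = t \<cdot> u2" by (rule kernel_cancel[OF kk, rotated -1]) (use u c te ob in auto)
    then show "u1 = u2" by (rule kernel_cancel[OF kt, rotated -1]) (use u c ob in auto)
  qed (use te sq ob in auto)
qed

text \<open>The morphism \<rho> kills m but is monic on q = ker r, so m meets ker r trivially.\<close>

lemma comp_trivial_kernel:
  assumes kq: "is_kernel C q r" and km: "is_kernel C m \<rho>" and kj: "is_kernel C (\<rho> \<cdot> q) c"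
    and \<rho>: "Dom C \<rho> = Cod C q"
    and u: "u \<in> Mor C" "Cod C u = Dom C m" "(r \<cdot> m) \<cdot> u = Zm C (Dom C u) (Cod C (r \<cdot> m))"
  shows "u = Zm C (Dom C u) (Dom C m)"
proof -
  note qr = is_kernelD[OF kq] and m\<rho> = is_kernelD[OF km]
  obtain W M P A where ob: "Dom C u = W" "Dom C m = M" "Cod C m = P" "Cod C q = P" "Dom C q = A"
    using qr m\<rho> \<rho> by metis
  have obj: "W \<in> Obj C" "M \<in> Obj C" "A \<in> Obj C" using u qr m\<rho> ob dom_in_Obj by metis+
  have "r \<cdot> m \<cdot> u = Zm C W (Cod C r)" using u qr m\<rho> \<rho> ob comp_assoc[of u m r] by simp
  then obtain v where v: "v \<in> Mor C" "Dom C v = W" "Cod C v = A" "q \<cdot> v = m \<cdot> u"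
    using kernel_factors[OF kq, of "m \<cdot> u"] u qr m\<rho> \<rho> ob by auto
  have "(\<rho> \<cdot> q) \<cdot> v = (\<rho> \<cdot> m) \<cdot> u"
    using u v qr m\<rho> \<rho> ob comp_assoc[of v q \<rho>] comp_assoc[of u m \<rho>] by simp
  then have "(\<rho> \<cdot> q) \<cdot> v = (\<rho> \<cdot> q) \<cdot> Zm C W A" using u v qr m\<rho> \<rho> ob obj by simp
  then have "v = Zm C W A" by (rule kernel_cancel[OF kj, rotated -1]) (use v qr m\<rho> \<rho> ob obj in auto)
  then have "m \<cdot> u = m \<cdot> Zm C W M" using v qr m\<rho> ob obj by simp
  then have "u = Zm C W M" by (rule kernel_cancel[OF km, rotated -1]) (use u m\<rho> ob obj in auto)
  then show ?thesis using ob by simp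
qed

end

section \<open>Conflation categories\<close>

locale conflation_cat =
  fixes C :: "('o,'m,'x) addcat_scheme" and E :: "('m \<times> 'm) set"
  assumes conflation_category: "conflation_category C E"

sublocale conflation_cat \<subseteq> preadditive_cat
  using conflation_category unfolding conflation_category_def additive_def by unfold_locales blast

context conflation_cat
begin

lemma conflation_kernel: "(f, g) \<in> E \<Longrightarrow> is_kernel C f g"
  and conflation_cokernel: "(f, g) \<in> E \<Longrightarrow> is_cokernel C g f"
  using conflation_category unfolding conflation_category_def kernel_cokernel_pair_def by blast+

lemma conflationD: "(f, g) \<in> E \<Longrightarrow> f \<in> Mor C \<and> g \<in> Mor C \<and> Cod C f = Dom C g \<and> g \<cdot> f = Zm C (Dom C f) (Cod C g)"
  using conflation_kernel is_kernelD by blast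

lemma conflation_iso_closed:
  "(f, g) \<in> E \<Longrightarrow> f' \<in> Mor C \<Longrightarrow> g' \<in> Mor C \<Longrightarrow> Cod C f' = Dom C g' \<Longrightarrow>
   inverses \<alpha> \<alpha>' \<Longrightarrow> inverses \<beta> \<beta>' \<Longrightarrow> inverses \<gamma> \<gamma>' \<Longrightarrow>
   \<alpha> \<in> hom C (Dom C f) (Dom C f') \<Longrightarrow> \<beta> \<in> hom C (Cod C f) (Cod C f') \<Longrightarrow> \<gamma> \<in> hom C (Cod C g) (Cod C g') \<Longrightarrow>
   \<beta> \<cdot> f = f' \<cdot> \<alpha> \<Longrightarrow> \<gamma> \<cdot> g = g' \<cdot> \<beta> \<Longrightarrow> (f', g') \<in> E"
  using conflation_category inverses_iso unfolding conflation_category_def by blast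

lemma conflation_iso_dom:
  assumes fg: "(f, g) \<in> E" and \<alpha>: "inverses \<alpha> \<alpha>'" "Cod C \<alpha> = Dom C f"
  shows "(f \<cdot> \<alpha>, g) \<in> E"
proof -
  note b = conflationD[OF fg]
  have a: "\<alpha> \<in> Mor C" "\<alpha>' \<in> Mor C" "Dom C \<alpha>' = Cod C \<alpha>" "Cod C \<alpha>' = Dom C \<alpha>"
    "\<alpha> \<cdot> \<alpha>' = Id C (Cod C \<alpha>)" using \<alpha> unfolding inverses_def by auto
  show ?thesis
  proof (rule conflation_iso_closed[OF fg, of _ _ \<alpha>' \<alpha> "Id C (Cod C f)" "Id C (Cod C f)" "Id C (Cod C g)" "Id C (Cod C g)"])
    show "Id C (Cod C f) \<cdot> f = (f \<cdot> \<alpha>) \<cdot> \<alpha>'"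
      using \<alpha> a b comp_assoc[of \<alpha>' \<alpha> f] by simp
  qed (use \<alpha> a b in \<open>auto simp: hom_def inverses_def\<close>)
qed

lemma conflation_iso_cod:
  assumes fg: "(f, g) \<in> E" and \<gamma>: "inverses \<gamma> \<gamma>'" "Dom C \<gamma> = Cod C g"
  shows "(f, \<gamma> \<cdot> g) \<in> E"
proof -
  note b = conflationD[OF fg]
  have c: "\<gamma> \<in> Mor C" "\<gamma>' \<in> Mor C" "Dom C \<gamma>' = Cod C \<gamma>" "Cod C \<gamma>' = Dom C \<gamma>"
    using \<gamma> unfolding inverses_def by auto
  show ?thesis
    by (rule conflation_iso_closed[OF fg, of _ _ "Id C (Dom C f)" "Id C (Dom C f)" "Id C (Cod C f)"
          "Id C (Cod C f)" \<gamma> \<gamma>'])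
      (use \<gamma> b c in \<open>auto simp: hom_def\<close>)
qed

lemma conflation_iso_middle:
  assumes fg: "(f, g) \<in> E" and \<beta>: "inverses \<beta> \<beta>'" "Dom C \<beta> = Cod C f"
  shows "(\<beta> \<cdot> f, g \<cdot> \<beta>') \<in> E"
proof -
  note b = conflationD[OF fg]
  have c: "\<beta> \<in> Mor C" "\<beta>' \<in> Mor C" "Dom C \<beta>' = Cod C \<beta>" "Cod C \<beta>' = Dom C \<beta>"
    "\<beta>' \<cdot> \<beta> = Id C (Dom C \<beta>)" using \<beta> unfolding inverses_def by auto
  show ?thesis
  proof (rule conflation_iso_closed[OF fg, of _ _ "Id C (Dom C f)" "Id C (Dom C f)" \<beta> \<beta>'
        "Id C (Cod C g)" "Id C (Cod C g)"])
    show "Id C (Cod C g) \<cdot> g = (g \<cdot> \<beta>') \<cdot> \<beta>"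
      using \<beta> b c comp_assoc[of \<beta> \<beta>' g] by simp
  qed (use \<beta> b c in \<open>auto simp: hom_def\<close>)
qed

lemma conflation_if_kernel: "(f, g) \<in> E \<Longrightarrow> is_kernel C f' g \<Longrightarrow> (f', g) \<in> E"
  using kernels_iso[of f g f'] conflation_kernel conflation_iso_dom by metis

lemma conflation_if_cokernel: "(f, g) \<in> E \<Longrightarrow> is_cokernel C g' f \<Longrightarrow> (f, g') \<in> E"
  using cokernels_iso[of g f g'] conflation_cokernel conflation_iso_cod by metis

lemma factor_through_deflation:
  assumes \<sigma>: "deflation E \<sigma>" and f: "f \<in> Mor C"
    and triv: "\<And>u. u \<in> Mor C \<Longrightarrow> Cod C u = Dom C f \<Longrightarrow> f \<cdot> u = Zm C (Dom C u) (Cod C f) \<Longrightarrow>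
      u = Zm C (Dom C u) (Dom C f)"
    and u': "u' \<in> Mor C" "Dom C u' = Dom C \<sigma>" "Cod C u' = Dom C f"
    and h: "h \<in> Mor C" "Dom C h = Cod C \<sigma>" "Cod C h = Cod C f" and sq: "f \<cdot> u' = h \<cdot> \<sigma>"
  shows "\<exists>u. u \<in> Mor C \<and> Dom C u = Dom C h \<and> Cod C u = Dom C f \<and> f \<cdot> u = h"
proof -
  obtain \<tau> where \<tau>\<sigma>: "(\<tau>, \<sigma>) \<in> E" using \<sigma> unfolding deflation_def by blast
  note b = conflationD[OF \<tau>\<sigma>] and coker = conflation_cokernel[OF \<tau>\<sigma>]
  have obj: "Dom C \<tau> \<in> Obj C" "Dom C f \<in> Obj C" using b f by simp_all
  have "f \<cdot> u' \<cdot> \<tau> = h \<cdot> \<sigma> \<cdot> \<tau>"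
    using sq b u' h f comp_assoc[of \<tau> u' f] comp_assoc[of \<tau> \<sigma> h] by simp
  then have "f \<cdot> u' \<cdot> \<tau> = Zm C (Dom C \<tau>) (Cod C f)" using b h obj by simp
  then have "u' \<cdot> \<tau> = Zm C (Dom C \<tau>) (Dom C f)" using triv[of "u' \<cdot> \<tau>"] b u' by simp
  then obtain u where u: "u \<in> Mor C" "Dom C u = Cod C \<sigma>" "Cod C u = Dom C f" "u \<cdot> \<sigma> = u'"
    using cokernel_factors[OF coker, of u'] b u' by auto
  have "(f \<cdot> u) \<cdot> \<sigma> = h \<cdot> \<sigma>" using u sq f b comp_assoc[of \<sigma> u f] by simp
  then have "f \<cdot> u = h" by (rule cokernel_cancel[OF coker, rotated -1]) (use u f h in auto)
  then show ?thesis using u h by auto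
qed

end

locale deflation_exact_cat =
  fixes C :: "('o,'m,'x) addcat_scheme" and E :: "('m \<times> 'm) set"
  assumes deflation_exact: "deflation_exact C E"

sublocale deflation_exact_cat \<subseteq> conflation_cat
  using deflation_exact unfolding deflation_exact_def by unfold_locales blast

context deflation_exact_cat
begin

lemma deflation_comp: "deflation E d1 \<Longrightarrow> deflation E d2 \<Longrightarrow> Cod C d1 = Dom C d2 \<Longrightarrow> deflation E (d2 \<cdot> d1)"
  using deflation_exact unfolding deflation_exact_def by blast

lemma deflation_pullback_exists:
  "deflation E d \<Longrightarrow> f \<in> Mor C \<Longrightarrow> Cod C f = Cod C d \<Longrightarrow> \<exists>d' f'. is_pullback C f d d' f' \<and> deflation E d'"
  using deflation_exact unfolding deflation_exact_def by blast

text \<open>Axiom R2 provides one pullback that is a deflation; since conflations are closed under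
  isomorphism, every pullback of a deflation is one.\<close>

lemma deflation_pullback:
  assumes pb: "is_pullback C f d d' f'" and d: "deflation E d"
  shows "deflation E d'"
proof -
  note sq = is_pullbackD[OF pb]
  obtain d'' f'' where pb'': "is_pullback C f d d'' f''" and "deflation E d''"
    using deflation_pullback_exists[OF d] sq by blast
  then obtain k'' where k'': "(k'', d'') \<in> E" unfolding deflation_def by blast
  obtain \<theta> \<theta>' where \<theta>: "inverses \<theta> \<theta>'" "Dom C \<theta> = Dom C d'" "Cod C \<theta> = Dom C d''" "d' = d'' \<cdot> \<theta>"
    using pullbacks_iso[OF pb'' pb] by blast
  have "Dom C \<theta>' = Cod C k''" using \<theta> conflationD[OF k''] unfolding inverses_def by auto
  then have "(\<theta>' \<cdot> k'', d'' \<cdot> \<theta>) \<in> E" using conflation_iso_middle[OF k'' inverses_sym[OF \<theta>(1)]] by simp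
  then show ?thesis using \<theta> unfolding deflation_def by auto
qed

lemma Id_deflation: "Y \<in> Obj C \<Longrightarrow> deflation E (Id C Y)"
proof -
  assume Y: "Y \<in> Obj C"
  obtain z where z: "zero_object C z" "deflation E (Id C z)"
    using deflation_exact unfolding deflation_exact_def by blast
  then have "z \<in> Obj C" unfolding zero_object_def by blast
  then show ?thesis using deflation_pullback[OF Id_Zm_pullback[OF Y] z(2)] by blast
qed

text \<open>Pull r' back along h to a deflation \<sigma>.  The resulting lift g of h \<sigma> through r' is
  corrected by an element q w of ker r' so that \<rho> kills it; it then factors through m = ker \<rho>.\<close>

lemma kernel_comp_deflation_lift:
  assumes qd: "(q, r') \<in> E" and km: "is_kernel C m \<rho>" and kj: "is_kernel C (\<rho> \<cdot> q) c"
    and \<rho>: "Dom C \<rho> = Cod C q" and r: "r \<in> Mor C" "Dom C r = Cod C r'" "r \<cdot> r' = c \<cdot> \<rho>"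
    and h: "h \<in> Mor C" "Cod C h = Cod C r'" "r \<cdot> h = Zm C (Dom C h) (Cod C r)"
  obtains \<sigma> u where "deflation E \<sigma>" "Cod C \<sigma> = Dom C h" "u \<in> Mor C" "Dom C u = Dom C \<sigma>"
    "Cod C u = Dom C m" "(r' \<cdot> m) \<cdot> u = h \<cdot> \<sigma>"
proof -
  note qr = conflationD[OF qd] and m\<rho> = is_kernelD[OF km] and jc = is_kernelD[OF kj]
  obtain \<sigma> g where pb: "is_pullback C h r' \<sigma> g" and \<sigma>: "deflation E \<sigma>"
    using deflation_pullback_exists[of r' h] qd h unfolding deflation_def by blast
  note sq = is_pullbackD[OF pb]
  obtain V P A where ob: "Dom C \<sigma> = V" "Dom C g = V" "Cod C g = P" "Cod C q = P" "Dom C q = A"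
    using sq qr by metis
  have obj: "V \<in> Obj C" "A \<in> Obj C" "P \<in> Obj C" using sq qr ob dom_in_Obj cod_in_Obj by metis+
  have c: "c \<in> Mor C" "Dom C c = Cod C \<rho>" using jc qr m\<rho> \<rho> by auto
  have cr: "Cod C r = Cod C c"
    using Cod_comp[of r' r] Cod_comp[of \<rho> c] r c qr m\<rho> by metis
  have "c \<cdot> \<rho> \<cdot> g = r \<cdot> r' \<cdot> g"
    using r c sq qr m\<rho> \<rho> ob comp_assoc[of g \<rho> c] comp_assoc[of g r' r] by simp
  also have "\<dots> = (r \<cdot> h) \<cdot> \<sigma>" using r sq qr ob comp_assoc[of \<sigma> h r] by simp
  finally have "c \<cdot> \<rho> \<cdot> g = Zm C V (Cod C c)" using h sq ob obj cr c by simp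
  then obtain w where w: "w \<in> Mor C" "Dom C w = V" "Cod C w = A" "(\<rho> \<cdot> q) \<cdot> w = \<rho> \<cdot> g"
    using kernel_factors[OF kj, of "\<rho> \<cdot> g"] sq qr m\<rho> jc \<rho> ob by auto
  define z where "z = Add C g (neg (q \<cdot> w))"
  have qw: "q \<cdot> w \<in> Mor C" "Dom C (q \<cdot> w) = V" "Cod C (q \<cdot> w) = P" using w qr ob by auto
  have z: "z \<in> Mor C" "Dom C z = V" "Cod C z = P" unfolding z_def using qw sq ob by auto
  have "\<rho> \<cdot> z = Add C (\<rho> \<cdot> g) (neg (\<rho> \<cdot> q \<cdot> w))"
    unfolding z_def by (rule comp_diff_left) (use qw sq m\<rho> \<rho> ob in simp_all)
  also have "\<dots> = Zm C (Dom C z) (Cod C \<rho>)"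
    using w qr sq m\<rho> \<rho> ob z comp_assoc[of w q \<rho>] add_neg[of "\<rho> \<cdot> g"] by simp
  finally have "\<rho> \<cdot> z = Zm C (Dom C z) (Cod C \<rho>)" .
  then obtain u where u: "u \<in> Mor C" "Dom C u = V" "Cod C u = Dom C m" "m \<cdot> u = z"
    using kernel_factors[OF km, of z] z m\<rho> \<rho> ob by auto
  have "(r' \<cdot> m) \<cdot> u = r' \<cdot> z" using u z m\<rho> qr \<rho> ob comp_assoc[of u m r'] by simp
  also have "\<dots> = Add C (r' \<cdot> g) (neg (r' \<cdot> q \<cdot> w))"
    unfolding z_def by (rule comp_diff_left) (use qw sq qr ob in simp_all)
  also have "\<dots> = h \<cdot> \<sigma>"
  proof -
    have "r' \<cdot> q \<cdot> w = Zm C V (Cod C r')" using w qr ob obj comp_assoc[of w q r'] by simp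
    then show ?thesis using sq ob obj add_Zm_right[of "r' \<cdot> g" V "Cod C r'"] by simp
  qed
  finally show thesis using that \<sigma> sq u ob by auto
qed

lemma kernel_comp_deflation:
  assumes qd: "(q, r') \<in> E" and km: "is_kernel C m \<rho>" and kj: "is_kernel C (\<rho> \<cdot> q) c"
    and \<rho>: "Dom C \<rho> = Cod C q" and r: "r \<in> Mor C" "Dom C r = Cod C r'" "r \<cdot> r' = c \<cdot> \<rho>"
  shows "is_kernel C (r' \<cdot> m) r"
proof -
  note qr = conflationD[OF qd] and m\<rho> = is_kernelD[OF km] and jc = is_kernelD[OF kj]
  have f: "r' \<cdot> m \<in> Mor C" "Dom C (r' \<cdot> m) = Dom C m" "Cod C (r' \<cdot> m) = Cod C r'"
    using qr m\<rho> \<rho> by auto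
  have triv: "u = Zm C (Dom C u) (Dom C (r' \<cdot> m))"
    if "u \<in> Mor C" "Cod C u = Dom C (r' \<cdot> m)" "(r' \<cdot> m) \<cdot> u = Zm C (Dom C u) (Cod C (r' \<cdot> m))" for u
    using comp_trivial_kernel[OF conflation_kernel[OF qd] km kj \<rho>, of u] that f by simp
  show ?thesis
  proof (rule is_kernelI)
    have c: "c \<in> Mor C" "Dom C c = Cod C \<rho>" using jc qr m\<rho> \<rho> by auto
    have "r \<cdot> r' \<cdot> m = c \<cdot> \<rho> \<cdot> m"
      using r c qr m\<rho> \<rho> comp_assoc[of m r' r] comp_assoc[of m \<rho> c] by simp
    then show "r \<cdot> r' \<cdot> m = Zm C (Dom C (r' \<cdot> m)) (Cod C r)"
      using c m\<rho> f Cod_comp[of r' r] Cod_comp[of \<rho> c] r qr by simp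
  next
    fix h assume h: "h \<in> Mor C" "Cod C h = Dom C r" "r \<cdot> h = Zm C (Dom C h) (Cod C r)"
    obtain \<sigma> u where "deflation E \<sigma>" "Cod C \<sigma> = Dom C h" "u \<in> Mor C" "Dom C u = Dom C \<sigma>"
      "Cod C u = Dom C m" "(r' \<cdot> m) \<cdot> u = h \<cdot> \<sigma>"
      using kernel_comp_deflation_lift[OF qd km kj \<rho> r, of h] h r by metis
    then show "\<exists>u. u \<in> Mor C \<and> Dom C u = Dom C h \<and> Cod C u = Dom C (r' \<cdot> m) \<and> (r' \<cdot> m) \<cdot> u = h"
      using factor_through_deflation[OF _ f(1) triv, of \<sigma> u h] h r f by auto
  next
    fix u1 u2 assume "u1 \<in> Mor C" "u2 \<in> Mor C" "Dom C u2 = Dom C u1" "Cod C u1 = Dom C (r' \<cdot> m)"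
      "Cod C u2 = Dom C (r' \<cdot> m)" "(r' \<cdot> m) \<cdot> u1 = (r' \<cdot> m) \<cdot> u2"
    then show "u1 = u2" using cancel_if_trivial_kernel[OF f(1) triv] by blast
  qed (use f r in auto)
qed

end

section \<open>Admissibly deflation-percolating subcategories\<close>

locale percolating = deflation_exact_cat C E
  for C :: "('o,'m,'x) addcat_scheme" and E :: "('m \<times> 'm) set" +
  fixes A :: "'o set"
  assumes percolating: "adm_defl_percolating C E A"
begin

lemma A_Obj [simp]: "a \<in> A \<Longrightarrow> a \<in> Obj C"
  and A_nonempty: "\<exists>a. a \<in> A"
  using percolating unfolding adm_defl_percolating_def by blast+

lemma conflation_A_iff: "(f, g) \<in> E \<Longrightarrow> Cod C f \<in> A \<longleftrightarrow> Dom C f \<in> A \<and> Cod C g \<in> A"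
  using percolating unfolding adm_defl_percolating_def by blast

lemma A_factorization:
  assumes "h \<in> Mor C" "Cod C h \<in> A"
  obtains k e j p where "(k, e) \<in> E" "(j, p) \<in> E" "Dom C e = Dom C h" "Cod C e = Dom C j" "Cod C e \<in> A"
    "h = j \<cdot> e"
proof -
  obtain d i where di: "deflation E d" "inflation E i" "Cod C d = Dom C i" "Cod C d \<in> A" "h = i \<cdot> d"
    using percolating assms unfolding adm_defl_percolating_def by blast
  then obtain k p where "(k, d) \<in> E" "(i, p) \<in> E" unfolding deflation_def inflation_def by blast
  moreover have "Dom C d = Dom C h" using di calculation conflationD by auto
  ultimately show thesis using that di by blast
qed

lemma A_pushout:
  "inflation E a \<Longrightarrow> deflation E b \<Longrightarrow> Dom C a = Dom C b \<Longrightarrow> Cod C b \<in> A \<Longrightarrow>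
   \<exists>p q. is_pushout C a b p q \<and> deflation E p \<and> inflation E q"
  using percolating unfolding adm_defl_percolating_def by blast

definition A_inflation :: "'m \<Rightarrow> bool" where
  "A_inflation i \<longleftrightarrow> (\<exists>p. (i, p) \<in> E \<and> Cod C p \<in> A)"

definition A_deflation :: "'m \<Rightarrow> bool" where
  "A_deflation d \<longleftrightarrow> (\<exists>k. (k, d) \<in> E \<and> Dom C k \<in> A)"

lemma A_inflation_Mor: "A_inflation i \<Longrightarrow> i \<in> Mor C"
  and A_deflation_Mor: "A_deflation d \<Longrightarrow> d \<in> Mor C"
  unfolding A_inflation_def A_deflation_def using conflationD by blast+

lemma kernel_into_A_exists:
  assumes "h \<in> Mor C" "Cod C h \<in> A"
  shows "\<exists>t. is_kernel C t h"
proof -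
  obtain k e j p where "(k, e) \<in> E" "(j, p) \<in> E" "Cod C e = Dom C j" "h = j \<cdot> e"
    using A_factorization[OF assms] by metis
  then show ?thesis using kernel_comp_monic conflation_kernel by metis
qed

lemma A_inflation_if_kernel:
  assumes kt: "is_kernel C t h" and into_A: "Cod C h \<in> A"
  shows "A_inflation t"
proof -
  obtain k e j p where ke: "(k, e) \<in> E" and "(j, p) \<in> E" "Cod C e = Dom C j" "Cod C e \<in> A"
    "h = j \<cdot> e"
    using A_factorization[of h] is_kernelD[OF kt] into_A by metis
  then have "is_kernel C k h" using kernel_comp_monic conflation_kernel by metis
  then obtain \<alpha> \<alpha>' where "inverses \<alpha> \<alpha>'" "Cod C \<alpha> = Dom C k" "t = k \<cdot> \<alpha>"
    using kernels_iso[OF _ kt] by metis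
  then have "(t, e) \<in> E" using conflation_iso_dom[OF ke] by blast
  then show ?thesis unfolding A_inflation_def using \<open>Cod C e \<in> A\<close> by blast
qed

lemma A_zero_exists: "\<exists>z\<in>A. Id C z = Zm C z z"
proof -
  obtain a where a: "a \<in> A" using A_nonempty by blast
  then obtain k where k: "(k, Id C a) \<in> E" using Id_deflation[of a] unfolding deflation_def by auto
  have "Cod C k = a" using conflationD[OF k] a by simp
  then have "Dom C k \<in> A" using conflation_A_iff[OF k] a by simp
  then show ?thesis using Id_Zm_if_kernel_of_Id[OF conflation_kernel[OF k]] a by auto
qed

lemma Id_A_deflation: "Y \<in> Obj C \<Longrightarrow> A_deflation (Id C Y)"
proof -
  assume Y: "Y \<in> Obj C"
  obtain z where z: "z \<in> A" "Id C z = Zm C z z" using A_zero_exists by blast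
  obtain k where "(k, Id C Y) \<in> E" using Id_deflation[OF Y] unfolding deflation_def by blast
  then have "(Zm C z Y, Id C Y) \<in> E" using conflation_if_kernel Zm_is_kernel_of_Id z Y by simp
  then show ?thesis unfolding A_deflation_def using z Y by auto
qed

lemma Id_A_inflation: "Y \<in> Obj C \<Longrightarrow> A_inflation (Id C Y)"
  using A_nonempty A_inflation_if_kernel Id_is_kernel_of_Zm by (metis A_Obj Cod_Zm)

lemma A_deflation_pullback:
  assumes pb: "is_pullback C f d d' f'" and d: "A_deflation d"
  shows "A_deflation d'"
proof -
  obtain k where k: "(k, d) \<in> E" "Dom C k \<in> A" using d unfolding A_deflation_def by blast
  then have "deflation E d'" using deflation_pullback[OF pb] unfolding deflation_def by blast
  then obtain k' where k': "(k', d') \<in> E" unfolding deflation_def by blast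
  obtain v where "Dom C v = Dom C k" "is_kernel C v d'"
    using pullback_kernel[OF pb conflation_kernel[OF k(1)]] by blast
  then have "(v, d') \<in> E" using conflation_if_kernel[OF k'] by blast
  then show ?thesis using \<open>Dom C v = Dom C k\<close> k(2) unfolding A_deflation_def by auto
qed

lemma A_inflation_pullback:
  assumes i: "A_inflation i" and f: "f \<in> Mor C" "Cod C f = Cod C i"
  shows "\<exists>t g. A_inflation t \<and> is_pullback C f i t g"
proof -
  obtain p where ip: "(i, p) \<in> E" "Cod C p \<in> A" using i unfolding A_inflation_def by blast
  note b = conflationD[OF ip(1)]
  have pf: "p \<cdot> f \<in> Mor C" "Cod C (p \<cdot> f) \<in> A" using b f ip by auto
  then obtain t where kt: "is_kernel C t (p \<cdot> f)" using kernel_into_A_exists by blast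
  note tpf = is_kernelD[OF kt]
  have "p \<cdot> f \<cdot> t = Zm C (Dom C t) (Cod C p)" using tpf b f comp_assoc[of t f p] by simp
  then obtain g where g: "g \<in> Mor C" "Dom C g = Dom C t" "Cod C g = Dom C i" "i \<cdot> g = f \<cdot> t"
    using kernel_factors[OF conflation_kernel[OF ip(1)], of "f \<cdot> t"] tpf b f by auto
  have "is_pullback C f i t g" using kernel_pullback[OF conflation_kernel[OF ip(1)] kt] f g b by simp
  then show ?thesis using A_inflation_if_kernel[OF kt pf(2)] by blast
qed

lemma A_deflation_comp:
  assumes d1: "A_deflation d1" and d2: "A_deflation d2" and c: "Cod C d1 = Dom C d2"
  shows "A_deflation (d2 \<cdot> d1)"
proof -
  obtain k1 where k1: "(k1, d1) \<in> E" using d1 unfolding A_deflation_def by blast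
  obtain k2 where k2: "(k2, d2) \<in> E" "Dom C k2 \<in> A" using d2 unfolding A_deflation_def by blast
  have "deflation E (d2 \<cdot> d1)" using deflation_comp[OF _ _ c] k1 k2 unfolding deflation_def by blast
  then obtain k where k: "(k, d2 \<cdot> d1) \<in> E" unfolding deflation_def by blast
  obtain \<delta> \<iota> where pb: "is_pullback C k2 d1 \<delta> \<iota>"
    using deflation_pullback_exists[of d1 k2] k1 k2 c conflationD unfolding deflation_def by metis
  obtain \<kappa> where \<kappa>: "(\<kappa>, \<delta>) \<in> E" "Dom C \<kappa> \<in> A"
    using A_deflation_pullback[OF pb d1] unfolding A_deflation_def by blast
  have "Cod C \<kappa> \<in> A" using conflation_A_iff[OF \<kappa>(1)] \<kappa>(2) is_pullbackD[OF pb] k2 by simp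
  moreover have "(\<iota>, d2 \<cdot> d1) \<in> E"
    using conflation_if_kernel[OF k kernel_comp_pullback[OF pb conflation_kernel[OF k2(1)] c]] .
  ultimately show ?thesis
    using conflationD[OF \<kappa>(1)] is_pullbackD[OF pb] unfolding A_deflation_def by auto
qed

lemma A_pushout_conflations:
  assumes kd: "(k, d) \<in> E" and te: "(t, e) \<in> E" and dom: "Dom C k = Dom C e" and A: "Cod C e \<in> A"
  obtains \<pi> q r where "is_pushout C k e \<pi> q" "(k \<cdot> t, \<pi>) \<in> E" "(q, r) \<in> E"
    "r \<in> Mor C" "Dom C r = Cod C \<pi>" "Cod C r = Cod C d" "r \<cdot> \<pi> = d" "r \<cdot> q = Zm C (Dom C q) (Cod C d)"
proof -
  have "inflation E k" "deflation E e" using kd te unfolding inflation_def deflation_def by blast+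
  then obtain \<pi> q where po: "is_pushout C k e \<pi> q" and "deflation E \<pi>" "inflation E q"
    using A_pushout dom A by blast
  then obtain \<kappa> q' where \<kappa>: "(\<kappa>, \<pi>) \<in> E" and q': "(q, q') \<in> E"
    unfolding inflation_def deflation_def by blast
  obtain r where r: "r \<in> Mor C" "Dom C r = Cod C \<pi>" "Cod C r = Cod C d" "r \<cdot> \<pi> = d"
    "r \<cdot> q = Zm C (Dom C q) (Cod C d)" and cr: "is_cokernel C r q"
    using pushout_induced_cokernel[OF po conflation_cokernel[OF kd]] by blast
  have qr: "(q, r) \<in> E" using conflation_if_cokernel[OF q' cr] .
  have "is_kernel C (k \<cdot> t) \<pi>"
    using pushout_kernel_comp[OF po conflation_kernel[OF te] conflation_kernel[OF kd]
        conflation_kernel[OF qr]] r by blast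
  then have "(k \<cdot> t, \<pi>) \<in> E" using conflation_if_kernel[OF \<kappa>] by blast
  then show thesis using that po qr r by blast
qed

lemma A_inflation_comp:
  assumes i1: "A_inflation i1" and i2: "A_inflation i2" and c: "Cod C i1 = Dom C i2"
  shows "A_inflation (i2 \<cdot> i1)"
proof -
  obtain p1 where p1: "(i1, p1) \<in> E" "Cod C p1 \<in> A" using i1 unfolding A_inflation_def by blast
  obtain p2 where p2: "(i2, p2) \<in> E" "Cod C p2 \<in> A" using i2 unfolding A_inflation_def by blast
  have "Dom C i2 = Dom C p1" using c conflationD[OF p1(1)] by simp
  then obtain \<pi> q r where po: "is_pushout C i2 p1 \<pi> q" and i\<pi>: "(i2 \<cdot> i1, \<pi>) \<in> E" and qr: "(q, r) \<in> E"
    and "Cod C r = Cod C p2"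
    using A_pushout_conflations[OF p2(1) p1(1) _ p1(2)] by metis
  moreover have "Dom C q = Cod C p1" using is_pushoutD[OF po] by simp
  ultimately have "Cod C q \<in> A" using conflation_A_iff[OF qr] p1 p2 by simp
  then show ?thesis using i\<pi> is_pushoutD[OF po] unfolding A_inflation_def by auto
qed

lemma A_deflation_cancel:
  assumes d: "A_deflation d" and fg: "f \<in> Mor C" "g \<in> Mor C" "Dom C g = Dom C f" "Cod C g = Cod C f"
    and c: "Dom C d = Cod C f" and eq: "d \<cdot> f = d \<cdot> g"
  shows "\<exists>t. A_inflation t \<and> Cod C t = Dom C f \<and> f \<cdot> t = g \<cdot> t"
proof -
  obtain k where kd: "(k, d) \<in> E" "Dom C k \<in> A" using d unfolding A_deflation_def by blast
  note b = conflationD[OF kd(1)]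
  let ?\<phi> = "Add C f (neg g)"
  have \<phi>: "?\<phi> \<in> Mor C" "Dom C ?\<phi> = Dom C f" "Cod C ?\<phi> = Cod C f" using fg by auto
  have "d \<cdot> ?\<phi> = Add C (d \<cdot> f) (neg (d \<cdot> g))" by (rule comp_diff_left) (use fg b c in simp_all)
  then have "d \<cdot> ?\<phi> = Zm C (Dom C ?\<phi>) (Cod C d)" using eq fg b c \<phi> by simp
  then obtain u where u: "u \<in> Mor C" "Dom C u = Dom C f" "Cod C u = Dom C k" "k \<cdot> u = ?\<phi>"
    using kernel_factors[OF conflation_kernel[OF kd(1)], of ?\<phi>] \<phi> b c by auto
  then obtain t where kt: "is_kernel C t u" using kernel_into_A_exists kd(2) by metis
  note tu = is_kernelD[OF kt]
  have "?\<phi> \<cdot> t = k \<cdot> u \<cdot> t" using u b tu comp_assoc[of t u k] by simp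
  also have "\<dots> = Zm C (Dom C t) (Cod C f)" using u b tu c by simp
  finally have "Add C (f \<cdot> t) (neg (g \<cdot> t)) = Zm C (Dom C (f \<cdot> t)) (Cod C (f \<cdot> t))"
    using comp_diff_right[of f g t] fg tu u by simp
  then have "f \<cdot> t = g \<cdot> t" by (rule eq_if_diff_Zm[rotated -1]) (use fg tu u in simp_all)
  then show ?thesis using A_inflation_if_kernel[OF kt] kd(2) tu u by auto
qed

text \<open>Factor p k = j e by A2 and push k out along e by A3 to an A^{-1}-deflation \<pi>.  Then
  d = r' \<pi> with q = ker r' and p = \<rho> \<pi>; the morphism r into A is induced on coker k = d.\<close>

lemma A_deflation_A_inflation_pushout:
  assumes ip: "(i, p) \<in> E" "Cod C p \<in> A" and kd: "(k, d) \<in> E" "Dom C k \<in> A"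
    and cod_i: "Cod C i = Dom C d"
  obtains \<pi> q r' \<rho> c r where "A_deflation \<pi>" "Dom C \<pi> = Dom C d" "(q, r') \<in> E" "Cod C q = Cod C \<pi>"
    "Cod C r' = Cod C d" "r' \<cdot> \<pi> = d" "\<rho> \<in> Mor C" "Dom C \<rho> = Cod C \<pi>" "Cod C \<rho> = Cod C p" "\<rho> \<cdot> \<pi> = p"
    "is_kernel C (\<rho> \<cdot> q) c" "r \<in> Mor C" "Dom C r = Cod C d" "Cod C r \<in> A" "r \<cdot> r' = c \<cdot> \<rho>"
proof -
  note b = conflationD[OF ip(1)] and kb = conflationD[OF kd(1)]
  have pk: "p \<cdot> k \<in> Mor C" "Cod C (p \<cdot> k) \<in> A" using b kb cod_i ip by auto
  obtain t e j c where te: "(t, e) \<in> E" and jc: "(j, c) \<in> E" and e0: "Dom C e = Dom C (p \<cdot> k)"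
    and e: "Cod C e = Dom C j" "Cod C e \<in> A" and pkje: "p \<cdot> k = j \<cdot> e"
    using A_factorization[OF pk] by blast
  note tb = conflationD[OF te] and jb = conflationD[OF jc]
  have "Dom C e = Dom C k" using e0 b kb cod_i by simp
  have cj: "Cod C j = Cod C p" using pkje b kb jb tb cod_i e Cod_comp[of k p] Cod_comp[of e j] by metis
  obtain \<pi> q r' where po: "is_pushout C k e \<pi> q" and \<pi>: "(k \<cdot> t, \<pi>) \<in> E" and qr: "(q, r') \<in> E"
    and r': "r' \<in> Mor C" "Dom C r' = Cod C \<pi>" "Cod C r' = Cod C d" "r' \<cdot> \<pi> = d"
    using A_pushout_conflations[OF kd(1) te] \<open>Dom C e = Dom C k\<close> e by metis
  note sq = is_pushoutD[OF po]
  have "Dom C t \<in> A" using conflation_A_iff[OF te] tb e \<open>Dom C e = Dom C k\<close> kd(2) by simp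
  moreover have "Dom C (k \<cdot> t) = Dom C t" using tb kb \<open>Dom C e = Dom C k\<close> by simp
  ultimately have A\<pi>: "A_deflation \<pi>" using \<pi> unfolding A_deflation_def by metis
  obtain \<rho> where \<rho>: "\<rho> \<in> Mor C" "Dom C \<rho> = Cod C \<pi>" "Cod C \<rho> = Cod C p" "\<rho> \<cdot> \<pi> = p" "\<rho> \<cdot> q = j"
    using pushout_factors[OF po, of p j] b kb jb cod_i e cj sq pkje by auto
  have "(c \<cdot> p) \<cdot> k = (c \<cdot> j) \<cdot> e"
    using pkje b kb jb tb cod_i e cj comp_assoc[of k p c] comp_assoc[of e j c] by simp
  then have "(c \<cdot> p) \<cdot> k = Zm C (Dom C k) (Cod C (c \<cdot> p))"
    using b kb jb tb cod_i e cj \<open>Dom C e = Dom C k\<close> by simp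
  then obtain r where r: "r \<in> Mor C" "Dom C r = Cod C d" "Cod C r = Cod C c" "r \<cdot> d = c \<cdot> p"
    using cokernel_factors[OF conflation_cokernel[OF kd(1)], of "c \<cdot> p"] b kb jb cod_i cj by auto
  have "(r \<cdot> r') \<cdot> \<pi> = (c \<cdot> \<rho>) \<cdot> \<pi>"
    using r r' \<rho> jb b cj sq comp_assoc[of \<pi> r' r] comp_assoc[of \<pi> \<rho> c] by simp
  then have "r \<cdot> r' = c \<cdot> \<rho>"
    by (rule cokernel_cancel[OF conflation_cokernel[OF \<pi>], rotated -1])
      (use r r' \<rho> jb cj in simp_all)
  moreover have "Cod C c \<in> A" using conflation_A_iff[OF jc] cj ip(2) by simp
  moreover have "is_kernel C (\<rho> \<cdot> q) c" using conflation_kernel[OF jc] \<rho>(5) by simp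
  moreover have "Dom C \<pi> = Dom C d" using sq kb by simp
  ultimately show thesis using that[of \<pi> q r' \<rho> c r] A\<pi> qr r r' \<rho> sq by simp
qed

text \<open>With \<pi> and \<rho> as above, \<pi> i = m d' for m = ker \<rho>; this square is a pullback of \<pi>,
  so d' is an A^{-1}-deflation, and r' m is a kernel of r, hence an A^{-1}-inflation.\<close>

lemma A_deflation_A_inflation_swap:
  assumes i: "A_inflation i" and d: "A_deflation d" and cod_i: "Cod C i = Dom C d"
  shows "\<exists>i' d'. A_inflation i' \<and> A_deflation d' \<and> Cod C d' = Dom C i' \<and> d \<cdot> i = i' \<cdot> d'"
proof -
  obtain p where ip: "(i, p) \<in> E" "Cod C p \<in> A" using i unfolding A_inflation_def by blast
  obtain k where kd: "(k, d) \<in> E" "Dom C k \<in> A" using d unfolding A_deflation_def by blast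
  note b = conflationD[OF ip(1)]
  obtain \<pi> q r' \<rho> c r where A\<pi>: "A_deflation \<pi>" and \<pi>: "Dom C \<pi> = Dom C d" and qr: "(q, r') \<in> E"
    "Cod C q = Cod C \<pi>" "Cod C r' = Cod C d" "r' \<cdot> \<pi> = d" and \<rho>: "\<rho> \<in> Mor C" "Dom C \<rho> = Cod C \<pi>"
    "Cod C \<rho> = Cod C p" "\<rho> \<cdot> \<pi> = p" and kj: "is_kernel C (\<rho> \<cdot> q) c"
    and r: "r \<in> Mor C" "Dom C r = Cod C d" "Cod C r \<in> A" "r \<cdot> r' = c \<cdot> \<rho>"
    using A_deflation_A_inflation_pushout[OF ip kd cod_i] by metis
  have \<pi>M: "\<pi> \<in> Mor C" using A_deflation_Mor[OF A\<pi>] .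
  obtain m where km: "is_kernel C m \<rho>" using kernel_into_A_exists[of \<rho>] \<rho> ip(2) by auto
  note m\<rho> = is_kernelD[OF km]
  have "\<rho> \<cdot> \<pi> \<cdot> i = Zm C (Dom C (\<pi> \<cdot> i)) (Cod C \<rho>)"
    using b \<rho> \<pi>M \<pi> cod_i comp_assoc[of i \<pi> \<rho>] by simp
  then obtain d' where d': "d' \<in> Mor C" "Dom C d' = Dom C i" "Cod C d' = Dom C m" "m \<cdot> d' = \<pi> \<cdot> i"
    using kernel_factors[OF km, of "\<pi> \<cdot> i"] b \<rho> \<pi>M \<pi> cod_i by auto
  have "is_pullback C \<pi> m i d'"
    using kernel_pullback[OF km _ \<pi>M _ d'] conflation_kernel[OF ip(1)] \<rho> by simp
  then have Ad': "A_deflation d'" using A_deflation_pullback[OF is_pullback_sym A\<pi>] by blast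
  have "is_kernel C (r' \<cdot> m) r" using kernel_comp_deflation[OF qr(1) km kj _ r(1)] qr \<rho> r by simp
  then have Ai': "A_inflation (r' \<cdot> m)" using A_inflation_if_kernel r(3) by blast
  have r': "r' \<in> Mor C" "Dom C r' = Cod C \<pi>" using conflationD[OF qr(1)] qr(2) by auto
  have "d \<cdot> i = r' \<cdot> \<pi> \<cdot> i" using qr(4) r' \<pi>M \<pi> b cod_i comp_assoc[of i \<pi> r'] by auto
  also have "\<dots> = (r' \<cdot> m) \<cdot> d'" using d' r' m\<rho> \<rho> comp_assoc[of d' m r'] by simp
  finally have "d \<cdot> i = (r' \<cdot> m) \<cdot> d'" .
  moreover have "Cod C d' = Dom C (r' \<cdot> m)" using d' r' m\<rho> \<rho> by simp
  ultimately show ?thesis using Ai' Ad' by blast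
qed

section \<open>Weak isomorphisms\<close>

abbreviation S :: "'m set" where
  "S \<equiv> weak_isos C E A"

lemma weak_isos_Mor: "s \<in> S \<Longrightarrow> s \<in> Mor C"
  by (induction rule: weak_isos.induct) (use conflationD in auto)

lemma A_inflation_weak_iso: "A_inflation i \<Longrightarrow> i \<in> S"
  unfolding A_inflation_def by (auto intro: weak_isos.infl)

lemma A_deflation_weak_iso: "A_deflation d \<Longrightarrow> d \<in> S"
  unfolding A_deflation_def by (auto intro: weak_isos.defl)

lemma Id_weak_iso: "a \<in> Obj C \<Longrightarrow> Id C a \<in> S"
  using Id_A_inflation A_inflation_weak_iso by blast

lemma weak_iso_pullback: "s \<in> S \<Longrightarrow> f \<in> Mor C \<Longrightarrow> Cod C f = Cod C s \<Longrightarrow> \<exists>t g. t \<in> S \<and> is_pullback C f s t g"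
proof (induction s arbitrary: f rule: weak_isos.induct)
  case (infl i p)
  then have "A_inflation i" unfolding A_inflation_def by blast
  then show ?case using A_inflation_pullback infl A_inflation_weak_iso by blast
next
  case (defl k d)
  then obtain d' f' where pb: "is_pullback C f d d' f'"
    using deflation_pullback_exists[of d f] unfolding deflation_def by blast
  have "A_deflation d" using defl unfolding A_deflation_def by blast
  then show ?case using A_deflation_pullback[OF pb] A_deflation_weak_iso pb by blast
next
  case (comp s t)
  have "Cod C f = Cod C t"
    using comp.prems weak_isos_Mor[OF comp.hyps(1)] weak_isos_Mor[OF comp.hyps(2)] comp.hyps(3) by simp
  then obtain t2 g2 where t2: "t2 \<in> S" and pb2: "is_pullback C f t t2 g2"
    using comp.IH(2)[OF comp.prems(1)] by blast
  note sq2 = is_pullbackD[OF pb2]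
  have "g2 \<in> Mor C" "Cod C g2 = Cod C s" using sq2 comp.hyps(3) by auto
  then obtain t1 g1 where t1: "t1 \<in> S" and pb1: "is_pullback C g2 s t1 g1"
    using comp.IH(1) by blast
  have "t2 \<cdot> t1 \<in> S" using weak_isos.comp[OF t1 t2] is_pullbackD[OF pb1] sq2 by auto
  then show ?case using pullback_paste[OF pb2 pb1 comp.hyps(3)] by blast
qed

lemma weak_iso_cancel:
  "s \<in> S \<Longrightarrow> f \<in> Mor C \<Longrightarrow> g \<in> Mor C \<Longrightarrow> Dom C g = Dom C f \<Longrightarrow> Cod C g = Cod C f \<Longrightarrow>
   Dom C s = Cod C f \<Longrightarrow> s \<cdot> f = s \<cdot> g \<Longrightarrow> \<exists>t\<in>S. Cod C t = Dom C f \<and> f \<cdot> t = g \<cdot> t"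
proof (induction s arbitrary: f g rule: weak_isos.induct)
  case (infl i p)
  have "f = g" by (rule kernel_cancel[OF conflation_kernel[OF infl(1)]]) (use infl in auto)
  then show ?case using Id_weak_iso[of "Dom C f"] infl(3) by (intro bexI[of _ "Id C (Dom C f)"]) auto
next
  case (defl k d)
  then have "A_deflation d" unfolding A_deflation_def by blast
  then show ?case using A_deflation_cancel defl A_inflation_weak_iso by metis
next
  case (comp s t)
  note ms = weak_isos_Mor[OF comp.hyps(1)] and mt = weak_isos_Mor[OF comp.hyps(2)]
  have ds: "Dom C s = Cod C f" using comp.prems(5) ms mt comp.hyps(3) by simp
  have sf: "s \<cdot> f \<in> Mor C" "s \<cdot> g \<in> Mor C" "Dom C (s \<cdot> g) = Dom C (s \<cdot> f)"
    "Cod C (s \<cdot> g) = Cod C (s \<cdot> f)" "Dom C t = Cod C (s \<cdot> f)"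
    using comp.prems ms mt comp.hyps(3) ds by auto
  have "t \<cdot> s \<cdot> f = t \<cdot> s \<cdot> g"
    using comp.prems comp_assoc[of f s t] comp_assoc[of g s t] ms mt comp.hyps(3) ds by simp
  then obtain t1 where t1: "t1 \<in> S" "Cod C t1 = Dom C (s \<cdot> f)" "(s \<cdot> f) \<cdot> t1 = (s \<cdot> g) \<cdot> t1"
    using comp.IH(2)[OF sf] by blast
  note mt1 = weak_isos_Mor[OF t1(1)]
  have c1: "Cod C t1 = Dom C f" using t1(2) comp.prems(1) ms ds by simp
  have ft: "f \<cdot> t1 \<in> Mor C" "g \<cdot> t1 \<in> Mor C" "Dom C (g \<cdot> t1) = Dom C (f \<cdot> t1)"
    "Cod C (g \<cdot> t1) = Cod C (f \<cdot> t1)" "Dom C s = Cod C (f \<cdot> t1)"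
    using comp.prems mt1 c1 ds by auto
  have "s \<cdot> f \<cdot> t1 = s \<cdot> g \<cdot> t1"
    using t1(3) comp_assoc[of t1 f s] comp_assoc[of t1 g s] comp.prems ms mt1 c1 ds by simp
  then obtain t2 where t2: "t2 \<in> S" "Cod C t2 = Dom C (f \<cdot> t1)" "(f \<cdot> t1) \<cdot> t2 = (g \<cdot> t1) \<cdot> t2"
    using comp.IH(1)[OF ft] by blast
  note mt2 = weak_isos_Mor[OF t2(1)]
  have c2: "Cod C t2 = Dom C t1" using t2(2) comp.prems(1) mt1 c1 by simp
  have "t1 \<cdot> t2 \<in> S" using weak_isos.comp[OF t2(1) t1(1) c2] .
  moreover have "f \<cdot> t1 \<cdot> t2 = g \<cdot> t1 \<cdot> t2"
    using t2(3) comp_assoc[of t2 t1 f] comp_assoc[of t2 t1 g] comp.prems mt1 mt2 c1 c2 by simp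
  moreover have "Cod C (t1 \<cdot> t2) = Dom C f" using mt1 mt2 c1 c2 by simp
  ultimately show ?case by blast
qed

lemma weak_iso_factorization:
  "s \<in> S \<Longrightarrow> \<exists>i d. A_inflation i \<and> A_deflation d \<and> Cod C d = Dom C i \<and> s = i \<cdot> d"
proof (induction rule: weak_isos.induct)
  case (infl f g)
  note b = conflationD[OF infl(1)]
  have "A_inflation f" using infl unfolding A_inflation_def by blast
  moreover have "A_deflation (Id C (Dom C f))" using Id_A_deflation b by simp
  ultimately show ?case using b by (intro exI[of _ f] exI[of _ "Id C (Dom C f)"]) simp
next
  case (defl f g)
  note b = conflationD[OF defl(1)]
  have "A_deflation g" using defl unfolding A_deflation_def by blast
  moreover have "A_inflation (Id C (Cod C g))" using Id_A_inflation b by simp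
  ultimately show ?case using b by (intro exI[of _ "Id C (Cod C g)"] exI[of _ g]) simp
next
  case (comp s t)
  obtain i1 d1 where s: "A_inflation i1" "A_deflation d1" "Cod C d1 = Dom C i1" "s = i1 \<cdot> d1"
    using comp.IH(1) by blast
  obtain i2 d2 where t: "A_inflation i2" "A_deflation d2" "Cod C d2 = Dom C i2" "t = i2 \<cdot> d2"
    using comp.IH(2) by blast
  have m: "i1 \<in> Mor C" "d1 \<in> Mor C" "i2 \<in> Mor C" "d2 \<in> Mor C"
    using s t A_inflation_Mor A_deflation_Mor by auto
  have c: "Cod C i1 = Dom C d2" using comp.hyps(3) s t m by simp
  obtain i' d' where sw: "A_inflation i'" "A_deflation d'" "Cod C d' = Dom C i'" "d2 \<cdot> i1 = i' \<cdot> d'"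
    using A_deflation_A_inflation_swap[OF s(1) t(2) c] by blast
  have m': "i' \<in> Mor C" "d' \<in> Mor C" using sw A_inflation_Mor A_deflation_Mor by auto
  have "Dom C (d2 \<cdot> i1) = Dom C i1" "Cod C (d2 \<cdot> i1) = Cod C d2" using m c by auto
  then have c': "Dom C d' = Dom C i1" "Cod C i' = Cod C d2" using sw(3,4) m' by auto
  have "t \<cdot> s = i2 \<cdot> (d2 \<cdot> i1) \<cdot> d1"
    using s(3,4) t(3,4) comp_assoc[of d1 i1 d2] comp_assoc[of "i1 \<cdot> d1" d2 i2] m c by simp
  also have "\<dots> = (i2 \<cdot> i') \<cdot> d' \<cdot> d1"
    using sw(3,4) comp_assoc[of d1 d' i'] comp_assoc[of "d' \<cdot> d1" i' i2] m m' c' s(3) t(3) by simp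
  moreover have "Cod C (d' \<cdot> d1) = Dom C (i2 \<cdot> i')" using m m' c' s(3) t(3) sw(3) by simp
  ultimately show ?case
    using A_inflation_comp[OF sw(1) t(1)] A_deflation_comp[OF s(2) sw(2)] m m' c' s(3) t(3) sw(3)
    by (intro exI[of _ "i2 \<cdot> i'"] exI[of _ "d' \<cdot> d1"]) simp
qed

lemma weak_isos_admissible: "s \<in> S \<Longrightarrow> s \<in> admissible C E"
  using weak_iso_factorization unfolding admissible_def A_inflation_def A_deflation_def
    inflation_def deflation_def by blast

lemma weak_isos_right_mult_system: "right_mult_system C S"
  unfolding right_mult_system_def
proof (intro conjI ballI impI)
  show "S \<subseteq> Mor C" using weak_isos_Mor by blast
next
  fix s t assume "s \<in> S" "t \<in> S" "Cod C s = Dom C t"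
  then show "t \<cdot> s \<in> S" by (rule weak_isos.comp)
next
  fix f s assume "f \<in> Mor C" "s \<in> S" "Cod C f = Cod C s"
  then show "\<exists>t g. t \<in> S \<and> g \<in> Mor C \<and> Cod C t = Dom C f \<and> Cod C g = Dom C s \<and> Dom C t = Dom C g \<and>
      f \<cdot> t = s \<cdot> g"
    using weak_iso_pullback is_pullbackD by blast
next
  fix f g s assume "f \<in> Mor C" "g \<in> Mor C" "s \<in> S"
    "Dom C f = Dom C g \<and> Cod C f = Cod C g \<and> Dom C s = Cod C f \<and> s \<cdot> f = s \<cdot> g"
  then show "\<exists>t\<in>S. Cod C t = Dom C f \<and> f \<cdot> t = g \<cdot> t" using weak_iso_cancel[of s f g] by auto
qed (use Id_weak_iso in auto)

lemma weak_isos_RMS2_pullback: "RMS2_pullback C S"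
  unfolding RMS2_pullback_def using weak_iso_pullback by blast

end

theorem mainTheorem1:
  fixes C :: "('o,'m,'x) addcat_scheme" and E :: "('m \<times> 'm) set" and A :: "'o set"
  assumes "deflation_exact C E"
    and "adm_defl_percolating C E A"
  shows "weak_isos C E A = weak_isos C E A \<inter> admissible C E \<and>
         right_mult_system C (weak_isos C E A) \<and>
         RMS2_pullback C (weak_isos C E A)"
proof -
  interpret percolating C E A
    using assms by (intro percolating.intro deflation_exact_cat.intro percolating_axioms.intro)
  show ?thesis using weak_isos_admissible weak_isos_right_mult_system weak_isos_RMS2_pullback by blast
qed

end
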